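(* Let $1\in V$ be even, $\check T=(T,\bar T)$ a pair of even operators of $V$, and $a(\check z),b(\check z)\in\mathrm{End}(V)\{\check z\}$ creative (for $1$) and mutually local, with reduced-OPE pole orders $\check h_1,\dots,\check h_r$ of $a(\check z)b(\check w)$. Then for every $\check n\in\mathbb K^2$: (i) $a(\check z)_{(\check n)}b(\check z)$ is creative, and so is every numerator of the reduced OPE of $a(\check z)b(\check w)$; (ii) $a(\check z)s_1(b(\check z))\in\sum_{i=1}^r\check z^{-\check h_i}V[[\check z]]$; (iii) $s_1\big(a(\check z)_{(\check n)}b(\check z)\big)=a_{\check n}\,s_1(b(\check z))$; (iv) if $a(\check z)$ is translation covariant for $\check T$ and $b(\check z)$ is strongly creative for $1$ and $\check T$, then $a(\check z)_{(\check n)}b(\check z)$ is strongly creative for $1$ and $\check T$.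
   Context: $\mathbb K$ of characteristic $0$; super vector spaces, parity $\tilde a$, $\zeta=-1$. $\check z=(z,\bar z)$; $a(\check z)=\sum_{\check n\in\mathbb K^2}a_{\check n}z^{-n-1}\bar z^{-\bar n-1}$. A field gives a vertex series on each vector. $(\check z-\check w)^{\check h}=\sum_{\check i\in\mathbb N^2}(-1)^{i+\bar i}\binom hi\binom{\bar h}{\bar i}\check z^{\check h-\check i}\check w^{\check i}$, $\check{\mathbb K}=\{\check h:h-\bar h\in\mathbb Z\}$, $(\check z-\check w)^{\check h}_{w>z}=(-1)^{h-\bar h}(\check w-\check z)^{\check h}$. Mutually local: fields $c^i$, $\check h_i\in\check{\mathbb K}$ with $a(\check z)b(\check w)=\sum(\check z-\check w)^{-\check h_i}c^i$ and $\zeta^{\tilde a\tilde b}b(\check w)a(\check z)=\sum(\check z-\check w)^{-\check h_i}_{w>z}c^i$. Reduced OPE: $\check h_i-\check h_j\notin\mathbb Z^2$ ($i\neq j$) and no $(\check z-\check w)^{-\check n}c^i$, $\check n\in\mathbb N^2\setminus\{0\}$, a field; unique, its $c^i$ are the numerators and $\check h_i$ the pole orders. $\check n$-th product: $a(\check w)_{(\check n)}b(\check w)=\sum_i\partial_{\check z}^{(\check h_i-1-\check n)}c^i(\check z,\check w)|_{\check z=\check w}$ ($\partial^{(n)}=\partial^n/n!$ for $n\in\mathbb N$, else $0$; $1=(1,1)$). A distribution $a(\check z)$ (or $c(\check z,\check w)$) is creative if its value on $1$ is a power series; $s_1(a(\check z)):=a_{(-1,-1)}1$; strongly creative for $1,\check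 T$: $a(\check z)1=e^{zT+\bar z\bar T}s_1(a(\check z))$; translation covariant for $\check T$: $[T,a(\check z)]=\partial_za(\check z)$ and $[\bar T,a(\check z)]=\partial_{\bar z}a(\check z)$. *)

theory Defs
  imports Complex_Main "HOL-Library.Groups_Big_Fun"
begin

(* The super structure on V is given by its grading involution sigma
   (V_0 = fixed points, V_1 = (-1)-eigenspace).
   Pairs check-n = (n, nbar) :: 'k * 'k.
   A distribution a(z) in End(V){z} is a map  a :: 'k*'k => 'v => 'v,  a n = a_n
   (coefficient of z^(-n-1) zbar^(-nbar-1)).
   A two-variable distribution c(z,w) is  c :: 'k*'k => 'k*'k => 'v => 'v,
   c n m = coefficient of z^(-n-1) zbar^(-nbar-1) w^(-m-1) wbar^(-mbar-1).
   V-valued series are indexed by the exponent of the monomial. *)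

type_synonym ('k,'v) dist1 = "'k \<times> 'k \<Rightarrow> 'v \<Rightarrow> 'v"
type_synonym ('k,'v) dist2 = "'k \<times> 'k \<Rightarrow> 'k \<times> 'k \<Rightarrow> 'v \<Rightarrow> 'v"

definition negm1 :: "'k::field \<times> 'k \<Rightarrow> 'k \<times> 'k" where
  "negm1 p = (- fst p - 1, - snd p - 1)"

definition negp :: "'k::field \<times> 'k \<Rightarrow> 'k \<times> 'k" where
  "negp p = (- fst p, - snd p)"

definition in_trans :: "'k::field \<times> 'k \<Rightarrow> 'k \<times> 'k \<Rightarrow> bool" where
  "in_trans h p \<longleftrightarrow> (\<exists>i j::nat. p = (fst h + of_nat i, snd h + of_nat j))"

definition chkK :: "('k::field_char_0 \<times> 'k) set" where
  "chkK = {h. \<exists>k::int. fst h - snd h = of_int k}"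

definition chk_sign :: "'k::field_char_0 \<times> 'k \<Rightarrow> 'k" where
  "chk_sign h = (-1) powi (THE k::int. fst h - snd h = of_int k)"

definition super_space :: "('k::field_char_0 \<Rightarrow> 'v::ab_group_add \<Rightarrow> 'v) \<Rightarrow> ('v \<Rightarrow> 'v) \<Rightarrow> bool" where
  "super_space scale \<sigma> \<longleftrightarrow> vector_space scale \<and> Vector_Spaces.linear scale scale \<sigma> \<and> (\<forall>v. \<sigma> (\<sigma> v) = v)"

definition even_vec :: "('v \<Rightarrow> 'v) \<Rightarrow> 'v \<Rightarrow> bool" where
  "even_vec \<sigma> v \<longleftrightarrow> \<sigma> v = v"

definition even_op :: "('k::field_char_0 \<Rightarrow> 'v::ab_group_add \<Rightarrow> 'v) \<Rightarrow> ('v \<Rightarrow> 'v) \<Rightarrow> ('v \<Rightarrow> 'v) \<Rightarrow> bool" where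
  "even_op scale \<sigma> T \<longleftrightarrow> Vector_Spaces.linear scale scale T \<and> (\<forall>v. \<sigma> (T v) = T (\<sigma> v))"

definition End_dist1 :: "('k::field_char_0 \<Rightarrow> 'v::ab_group_add \<Rightarrow> 'v) \<Rightarrow> ('k,'v) dist1 \<Rightarrow> bool" where
  "End_dist1 scale a \<longleftrightarrow> (\<forall>n. Vector_Spaces.linear scale scale (a n))"

definition End_dist2 :: "('k::field_char_0 \<Rightarrow> 'v::ab_group_add \<Rightarrow> 'v) \<Rightarrow> ('k,'v) dist2 \<Rightarrow> bool" where
  "End_dist2 scale c \<longleftrightarrow> (\<forall>n m. Vector_Spaces.linear scale scale (c n m))"

text \<open>homogeneous of parity p (True = odd)\<close>
definition homog :: "('v::ab_group_add \<Rightarrow> 'v) \<Rightarrow> bool \<Rightarrow> ('k,'v) dist1 \<Rightarrow> bool" where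
  "homog \<sigma> p a \<longleftrightarrow> (\<forall>n v. \<sigma> (a n v) = (if p then - a n (\<sigma> v) else a n (\<sigma> v)))"

definition ser1 :: "('k::field,'v) dist1 \<Rightarrow> 'v \<Rightarrow> 'k \<times> 'k \<Rightarrow> 'v" where
  "ser1 a v p = a (negm1 p) v"

definition ser2 :: "('k::field,'v) dist2 \<Rightarrow> 'v \<Rightarrow> 'k \<times> 'k \<Rightarrow> 'k \<times> 'k \<Rightarrow> 'v" where
  "ser2 c v p q = c (negm1 p) (negm1 q) v"

text \<open>vertex series: finite sums of z^h V[[z]] (resp. z^h w^k V[[z,w]])\<close>
definition vseries1 :: "('k::field \<times> 'k \<Rightarrow> 'v::zero) \<Rightarrow> bool" where
  "vseries1 f \<longleftrightarrow> (\<exists>H. finite H \<and> (\<forall>p. f p \<noteq> 0 \<longrightarrow> (\<exists>h\<in>H. in_trans h p)))"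

definition vseries2 :: "('k::field \<times> 'k \<Rightarrow> 'k \<times> 'k \<Rightarrow> 'v::zero) \<Rightarrow> bool" where
  "vseries2 F \<longleftrightarrow> (\<exists>H. finite H \<and>
     (\<forall>p q. F p q \<noteq> 0 \<longrightarrow> (\<exists>hk\<in>H. in_trans (fst hk) p \<and> in_trans (snd hk) q)))"

definition field1 :: "('k::field_char_0 \<Rightarrow> 'v::ab_group_add \<Rightarrow> 'v) \<Rightarrow> ('k,'v) dist1 \<Rightarrow> bool" where
  "field1 scale a \<longleftrightarrow> End_dist1 scale a \<and> (\<forall>v. vseries1 (ser1 a v))"

definition field2 :: "('k::field_char_0 \<Rightarrow> 'v::ab_group_add \<Rightarrow> 'v) \<Rightarrow> ('k,'v) dist2 \<Rightarrow> bool" where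
  "field2 scale c \<longleftrightarrow> End_dist2 scale c \<and> (\<forall>v. vseries2 (ser2 c v))"

text \<open>coefficient of z^p w^q in (z-w)^h F (expansion in nonnegative powers of w)\<close>
definition mulZW :: "('k::field_char_0 \<Rightarrow> 'v::ab_group_add \<Rightarrow> 'v) \<Rightarrow> 'k \<times> 'k \<Rightarrow>
    ('k \<times> 'k \<Rightarrow> 'k \<times> 'k \<Rightarrow> 'v) \<Rightarrow> 'k \<times> 'k \<Rightarrow> 'k \<times> 'k \<Rightarrow> 'v" where
  "mulZW scale h F p q = (\<Sum>ij. scale ((-1) ^ (fst ij + snd ij) * (fst h gchoose fst ij) * (snd h gchoose snd ij))
      (F (fst p - fst h + of_nat (fst ij), snd p - snd h + of_nat (snd ij))
         (fst q - of_nat (fst ij), snd q - of_nat (snd ij))))"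

text \<open>coefficient of z^p w^q in (z-w)^h_{w>z} F = (-1)^(h-hbar) (w-z)^h F\<close>
definition mulWZ :: "('k::field_char_0 \<Rightarrow> 'v::ab_group_add \<Rightarrow> 'v) \<Rightarrow> 'k \<times> 'k \<Rightarrow>
    ('k \<times> 'k \<Rightarrow> 'k \<times> 'k \<Rightarrow> 'v) \<Rightarrow> 'k \<times> 'k \<Rightarrow> 'k \<times> 'k \<Rightarrow> 'v" where
  "mulWZ scale h F p q = scale (chk_sign h) (\<Sum>ij. scale ((-1) ^ (fst ij + snd ij) * (fst h gchoose fst ij) * (snd h gchoose snd ij))
      (F (fst p - of_nat (fst ij), snd p - of_nat (snd ij))
         (fst q - fst h + of_nat (fst ij), snd q - snd h + of_nat (snd ij))))"

definition mulZW_dist :: "('k::field_char_0 \<Rightarrow> 'v::ab_group_add \<Rightarrow> 'v) \<Rightarrow> 'k \<times> 'k \<Rightarrow> ('k,'v) dist2 \<Rightarrow> ('k,'v) dist2" where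
  "mulZW_dist scale h c = (\<lambda>n m v. mulZW scale h (ser2 c v) (negm1 n) (negm1 m))"

definition local_data :: "('k::field_char_0 \<Rightarrow> 'v::ab_group_add \<Rightarrow> 'v) \<Rightarrow> ('v \<Rightarrow> 'v) \<Rightarrow>
    ('k,'v) dist1 \<Rightarrow> ('k,'v) dist1 \<Rightarrow> nat \<Rightarrow> (nat \<Rightarrow> 'k \<times> 'k) \<Rightarrow> (nat \<Rightarrow> ('k,'v) dist2) \<Rightarrow> bool" where
  "local_data scale \<sigma> a b r h c \<longleftrightarrow> (\<exists>pa pb. homog \<sigma> pa a \<and> homog \<sigma> pb b \<and>
     (\<forall>i<r. field2 scale (c i) \<and> h i \<in> chkK) \<and>
     (\<forall>v p q. a (negm1 p) (b (negm1 q) v) = (\<Sum>i<r. mulZW scale (negp (h i)) (ser2 (c i) v) p q)) \<and>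
     (\<forall>v p q. scale (if pa \<and> pb then -1 else 1) (b (negm1 q) (a (negm1 p) v))
                = (\<Sum>i<r. mulWZ scale (negp (h i)) (ser2 (c i) v) p q)))"

definition mutually_local :: "('k::field_char_0 \<Rightarrow> 'v::ab_group_add \<Rightarrow> 'v) \<Rightarrow> ('v \<Rightarrow> 'v) \<Rightarrow>
    ('k,'v) dist1 \<Rightarrow> ('k,'v) dist1 \<Rightarrow> bool" where
  "mutually_local scale \<sigma> a b \<longleftrightarrow> (\<exists>r h c. local_data scale \<sigma> a b r h c)"

text \<open>(r, h, c) is the reduced OPE of a(z)b(w): pole orders h i, numerators c i\<close>
definition reduced_OPE :: "('k::field_char_0 \<Rightarrow> 'v::ab_group_add \<Rightarrow> 'v) \<Rightarrow> ('v \<Rightarrow> 'v) \<Rightarrow>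
    ('k,'v) dist1 \<Rightarrow> ('k,'v) dist1 \<Rightarrow> nat \<Rightarrow> (nat \<Rightarrow> 'k \<times> 'k) \<Rightarrow> (nat \<Rightarrow> ('k,'v) dist2) \<Rightarrow> bool" where
  "reduced_OPE scale \<sigma> a b r h c \<longleftrightarrow> local_data scale \<sigma> a b r h c \<and>
     (\<forall>i<r. \<forall>j<r. i \<noteq> j \<longrightarrow>
        \<not> (\<exists>k l::int. fst (h i) - fst (h j) = of_int k \<and> snd (h i) - snd (h j) = of_int l)) \<and>
     (\<forall>i<r. \<forall>na nb::nat. (na, nb) \<noteq> (0, 0) \<longrightarrow>
        \<not> field2 scale (mulZW_dist scale (- of_nat na, - of_nat nb) (c i)))"

text \<open>coefficient of w^e in (d_z^(ka) d_zbar^(kb)/(ka! kb!) F)(w,w)\<close>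
definition diag_der :: "('k::field_char_0 \<Rightarrow> 'v::ab_group_add \<Rightarrow> 'v) \<Rightarrow> nat \<Rightarrow> nat \<Rightarrow>
    ('k \<times> 'k \<Rightarrow> 'k \<times> 'k \<Rightarrow> 'v) \<Rightarrow> 'k \<times> 'k \<Rightarrow> 'v" where
  "diag_der scale ka kb F e = (\<Sum>p. scale (((fst p + of_nat ka) gchoose ka) * ((snd p + of_nat kb) gchoose kb))
      (F (fst p + of_nat ka, snd p + of_nat kb) (fst e - fst p, snd e - snd p)))"

text \<open>the n-th product a(w)_(n) b(w) computed from the reduced OPE (r, h, c)\<close>
definition nth_prod :: "('k::field_char_0 \<Rightarrow> 'v::ab_group_add \<Rightarrow> 'v) \<Rightarrow> nat \<Rightarrow> (nat \<Rightarrow> 'k \<times> 'k) \<Rightarrow>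
    (nat \<Rightarrow> ('k,'v) dist2) \<Rightarrow> 'k \<times> 'k \<Rightarrow> ('k,'v) dist1" where
  "nth_prod scale r h c n = (\<lambda>m v. \<Sum>i<r. \<Sum>k.
      (if fst (h i) - 1 - fst n = of_nat (fst k) \<and> snd (h i) - 1 - snd n = of_nat (snd k)
       then diag_der scale (fst k) (snd k) (ser2 (c i) v) (negm1 m) else 0))"

definition creative1 :: "'v::zero \<Rightarrow> ('k::field,'v) dist1 \<Rightarrow> bool" where
  "creative1 one a \<longleftrightarrow> (\<forall>n. a n one \<noteq> 0 \<longrightarrow> in_trans (0, 0) (negm1 n))"

definition creative2 :: "'v::zero \<Rightarrow> ('k::field,'v) dist2 \<Rightarrow> bool" where
  "creative2 one c \<longleftrightarrow> (\<forall>n m. c n m one \<noteq> 0 \<longrightarrow> in_trans (0, 0) (negm1 n) \<and> in_trans (0, 0) (negm1 m))"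

definition s1 :: "'v \<Rightarrow> ('k::field,'v) dist1 \<Rightarrow> 'v" where
  "s1 one a = a (-1, -1) one"

text \<open>translation covariance: [T, a(z)] = d_z a(z), [Tbar, a(z)] = d_zbar a(z)\<close>
definition transl_cov :: "('k::field_char_0 \<Rightarrow> 'v::ab_group_add \<Rightarrow> 'v) \<Rightarrow> ('v \<Rightarrow> 'v) \<Rightarrow> ('v \<Rightarrow> 'v) \<Rightarrow> ('k,'v) dist1 \<Rightarrow> bool" where
  "transl_cov scale T Tb a \<longleftrightarrow> (\<forall>n v.
     T (a n v) - a n (T v) = scale (- fst n) (a (fst n - 1, snd n) v) \<and>
     Tb (a n v) - a n (Tb v) = scale (- snd n) (a (fst n, snd n - 1) v))"

text \<open>expW T Tb i j = coefficient of z^i zbar^j in (z T + zbar Tbar)^(i+j) (noncommutative)\<close>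
fun expW :: "('v::ab_group_add \<Rightarrow> 'v) \<Rightarrow> ('v \<Rightarrow> 'v) \<Rightarrow> nat \<Rightarrow> nat \<Rightarrow> 'v \<Rightarrow> 'v" where
  "expW T Tb 0 0 v = v"
| "expW T Tb (Suc i) 0 v = T (expW T Tb i 0 v)"
| "expW T Tb 0 (Suc j) v = Tb (expW T Tb 0 j v)"
| "expW T Tb (Suc i) (Suc j) v = T (expW T Tb i (Suc j) v) + Tb (expW T Tb (Suc i) j v)"

text \<open>strongly creative: a(z)1 = exp(z T + zbar Tbar) s_1(a)\<close>
definition strongly_creative :: "('k::field_char_0 \<Rightarrow> 'v::ab_group_add \<Rightarrow> 'v) \<Rightarrow> 'v \<Rightarrow> ('v \<Rightarrow> 'v) \<Rightarrow> ('v \<Rightarrow> 'v) \<Rightarrow> ('k,'v) dist1 \<Rightarrow> bool" where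
  "strongly_creative scale one T Tb a \<longleftrightarrow> creative1 one a \<and>
     (\<forall>i j::nat. a (negm1 (of_nat i, of_nat j)) one
        = scale (inverse (fact (i + j))) (expW T Tb i j (s1 one a)))"

end

(* The numerators c^i of the reduced OPE are determined by a(z)b(w)1 = \<Sum>_i (z - w)^(-h_i) c^i(z,w)1:
   along an antidiagonal the coefficient identities are convolutions with the binomial series of
   (1 - X)^(-h_i), and for exponents that are pairwise incongruent mod \<int> the series (1 + X)^\<alpha> Q(X),
   Q a polynomial, are linearly independent.  Creativity of b leaves only nonnegative powers of w in
   a(z)b(w)1, and creativity of a only nonnegative powers of z in b(w)a(z)1; the summands lie in
   different classes of exponents mod \<int>^2, so each of them inherits this, and a lowest-coefficient
   argument passes it on to c^i(z,w)1.
   Setting w = 0 gives (i)-(iii).  For (iv), translation covariance gives a(z) e^(wT) = e^(wT) a(z - w),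
   hence a(z)b(w)1 = \<Sum>_i (z - w)^(-h_i) e^(wT) c^i(z - w, 0)1, and uniqueness identifies c^i(z,w)1 with
   e^(wT) c^i(z - w, 0)1, whose diagonal derivatives are e^(wT) applied to the coefficients of c^i(z,0)1. *)

theory Submission
  imports Defs "HOL-Computational_Algebra.Polynomial_FPS"
begin

unbundle fps_syntax

section \<open>Binomial series times polynomials\<close>

lemma fps_deriv_fps_binomial:
  "fps_deriv (fps_binomial (g::'k::field_char_0)) = fps_const g * fps_binomial (g - 1)"
proof (rule fps_ext)
  fix n
  show "fps_deriv (fps_binomial g) $ n = (fps_const g * fps_binomial (g - 1)) $ n"
    using gbinomial_absorption[of n g] by (simp add: mult.commute)
qed

definition binomial_deriv_poly :: "'k::field_char_0 \<Rightarrow> 'k poly \<Rightarrow> 'k poly" where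
  "binomial_deriv_poly g Q = smult g Q + [:1,1:] * pderiv Q"

lemma fps_deriv_binomial_times_poly:
  "fps_deriv (fps_binomial (g::'k::field_char_0) * fps_of_poly Q)
     = fps_binomial (g - 1) * fps_of_poly (binomial_deriv_poly g Q)"
proof -
  have b: "fps_binomial g = fps_binomial (g - 1) * (1 + fps_X)"
    using fps_binomial_add_mult[of "g - 1" 1] by (simp add: fps_binomial_1)
  have p: "fps_of_poly ([:1,1:] :: 'k poly) = 1 + fps_X"
    by (simp add: fps_of_poly_pCons)
  show ?thesis
    unfolding binomial_deriv_poly_def fps_deriv_mult fps_deriv_fps_binomial fps_of_poly_add
      fps_of_poly_mult fps_of_poly_smult fps_of_poly_pderiv p
    by (subst b) (simp add: algebra_simps)
qed

fun binomial_deriv_poly_iter :: "nat \<Rightarrow> 'k::field_char_0 \<Rightarrow> 'k poly \<Rightarrow> 'k poly" where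
  "binomial_deriv_poly_iter 0 g Q = Q"
| "binomial_deriv_poly_iter (Suc n) g Q = binomial_deriv_poly (g - of_nat n) (binomial_deriv_poly_iter n g Q)"

lemma fps_deriv_iter_binomial_times_poly:
  "(fps_deriv ^^ n) (fps_binomial (g::'k::field_char_0) * fps_of_poly Q)
     = fps_binomial (g - of_nat n) * fps_of_poly (binomial_deriv_poly_iter n g Q)"
proof (induction n)
  case (Suc n)
  then have "(fps_deriv ^^ Suc n) (fps_binomial g * fps_of_poly Q)
      = fps_binomial (g - of_nat n - 1) * fps_of_poly (binomial_deriv_poly_iter (Suc n) g Q)"
    by (simp only: funpow.simps comp_apply fps_deriv_binomial_times_poly
        binomial_deriv_poly_iter.simps)
  then show ?case by (simp add: algebra_simps)
qed simp

lemma binomial_deriv_poly_nonzero: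
  assumes "Q \<noteq> 0" and "(g::'k::field_char_0) \<notin> \<int>"
  shows "binomial_deriv_poly g Q \<noteq> 0"
proof -
  let ?d = "degree Q"
  have "coeff (pderiv Q) ?d = 0" by (simp add: coeff_pderiv coeff_eq_0)
  then have "coeff ([:1,1:] * pderiv Q) ?d = of_nat ?d * coeff Q ?d"
    by (cases ?d) (simp_all add: coeff_pderiv mult_pCons_left)
  then have "coeff (binomial_deriv_poly g Q) ?d = (g + of_nat ?d) * coeff Q ?d"
    by (simp add: binomial_deriv_poly_def algebra_simps)
  moreover have "g + of_nat ?d \<noteq> 0"
  proof
    assume "g + of_nat ?d = 0"
    then have "g = - of_nat ?d" by (simp add: eq_neg_iff_add_eq_0)
    with assms(2) show False by simp
  qed
  ultimately show ?thesis using assms(1) by auto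
qed

lemma binomial_deriv_poly_iter_nonzero:
  assumes "Q \<noteq> 0" and "(g::'k::field_char_0) \<notin> \<int>"
  shows "binomial_deriv_poly_iter n g Q \<noteq> 0"
proof (induction n)
  case (Suc n)
  have "g - of_nat n \<notin> \<int>"
    using assms(2) Ints_add[of "g - of_nat n" "of_nat n"] by auto
  with Suc.IH show ?case by (simp add: binomial_deriv_poly_nonzero)
qed (use assms in simp)

lemma fps_deriv_iter_add: "(fps_deriv ^^ n) (f + g) = (fps_deriv ^^ n) f + (fps_deriv ^^ n) g"
  by (induction n) simp_all

lemma fps_deriv_iter_sum: "(fps_deriv ^^ n) (\<Sum>i\<in>A. f i) = (\<Sum>i\<in>A. (fps_deriv ^^ n) (f i))"
  by (induction n) (simp_all add: fps_deriv_sum)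

lemma fps_of_poly_pderiv_iter: "fps_of_poly ((pderiv ^^ n) Q) = (fps_deriv ^^ n) (fps_of_poly Q)"
  by (induction n) (simp_all add: fps_of_poly_pderiv)

lemma pderiv_iter_Suc_degree: "(pderiv ^^ Suc (degree Q)) (Q :: 'k::field_char_0 poly) = 0"
proof -
  have "degree ((pderiv ^^ n) Q) = degree Q - n" for n
    by (induction n) (auto simp: degree_pderiv)
  then show ?thesis by (simp add: pderiv_eq_0_iff)
qed

lemma fps_binomial_poly_sum_eq_0:
  fixes \<alpha> :: "nat \<Rightarrow> 'k::field_char_0" and Q :: "nat \<Rightarrow> 'k poly"
  assumes "\<forall>i<m. \<forall>j<m. i \<noteq> j \<longrightarrow> \<alpha> i - \<alpha> j \<notin> \<int>"
    and "(\<Sum>i<m. fps_binomial (\<alpha> i) * fps_of_poly (Q i)) = 0"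
  shows "\<forall>i<m. Q i = 0"
  using assms
proof (induction m arbitrary: \<alpha> Q)
  case (Suc m)
  text \<open>Multiplying by \<open>(1 + X)\<^sup>-\<^sup>\<alpha>\<^sup>m\<close> turns the last summand into a polynomial, which
    \<open>deg Q\<^sub>m + 1\<close> derivatives kill, while the other summands keep their shape.\<close>
  define \<gamma> where "\<gamma> i = \<alpha> i - \<alpha> m" for i
  define N where "N = Suc (degree (Q m))"
  have "fps_binomial (- \<alpha> m) * fps_binomial (\<alpha> i) = fps_binomial (\<gamma> i)" for i
    by (simp add: \<gamma>_def fps_binomial_add_mult[symmetric])
  moreover have "fps_binomial (- \<alpha> m) * fps_binomial (\<alpha> m) = 1"
    by (simp add: fps_binomial_add_mult[symmetric])
  ultimately have "fps_binomial (- \<alpha> m) * (\<Sum>i<Suc m. fps_binomial (\<alpha> i) * fps_of_poly (Q i))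
      = (\<Sum>i<m. fps_binomial (\<gamma> i) * fps_of_poly (Q i)) + fps_of_poly (Q m)"
    by (simp add: distrib_left sum_distrib_left mult.assoc[symmetric])
  with Suc.prems(2) have sum0: "(\<Sum>i<m. fps_binomial (\<gamma> i) * fps_of_poly (Q i)) + fps_of_poly (Q m) = 0"
    by simp
  then have "(fps_deriv ^^ N) ((\<Sum>i<m. fps_binomial (\<gamma> i) * fps_of_poly (Q i)) + fps_of_poly (Q m)) = 0"
    using fps_deriv_iter_sum[where A="{}" and n=N] by simp
  then have "(\<Sum>i<m. fps_binomial (\<gamma> i - of_nat N) * fps_of_poly (binomial_deriv_poly_iter N (\<gamma> i) (Q i))) = 0"
    unfolding fps_deriv_iter_add fps_deriv_iter_sum fps_deriv_iter_binomial_times_poly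
      fps_of_poly_pderiv_iter[symmetric] N_def pderiv_iter_Suc_degree
    by simp
  moreover have "\<forall>i<m. \<forall>j<m. i \<noteq> j \<longrightarrow> (\<gamma> i - of_nat N) - (\<gamma> j - of_nat N) \<notin> \<int>"
    using Suc.prems(1) by (simp add: \<gamma>_def)
  ultimately have derivs0: "\<forall>i<m. binomial_deriv_poly_iter N (\<gamma> i) (Q i) = 0"
    using Suc.IH[of "\<lambda>i. \<gamma> i - of_nat N" "\<lambda>i. binomial_deriv_poly_iter N (\<gamma> i) (Q i)"] by blast
  have "\<forall>i<m. Q i = 0"
  proof (intro allI impI)
    fix i assume "i < m"
    then have "\<gamma> i \<notin> \<int>" using Suc.prems(1) by (simp add: \<gamma>_def)
    with derivs0 \<open>i < m\<close> show "Q i = 0" using binomial_deriv_poly_iter_nonzero by blast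
  qed
  moreover from this sum0 have "Q m = 0" by simp
  ultimately show ?case using less_Suc_eq by auto
qed simp

section \<open>Coefficients of series in two variables\<close>

lemma negm1_negm1 [simp]: "negm1 (negm1 p) = (p::'k::field \<times> 'k)"
  by (simp add: negm1_def)

text \<open>\<open>zw_coeff h (i, j)\<close> is the coefficient of \<open>z\<^sup>-\<^sup>h\<^sup>-\<^sup>i w\<^sup>i\<close> (and likewise in the barred
  variables, with \<open>j\<close>) in \<open>(z - w)\<^sup>-\<^sup>h\<close>.\<close>
definition zw_coeff :: "'k::field_char_0 \<times> 'k \<Rightarrow> nat \<times> nat \<Rightarrow> 'k" where
  "zw_coeff h ij = (-1) ^ (fst ij + snd ij) * ((- fst h) gchoose fst ij) * ((- snd h) gchoose snd ij)"

lemma mulZW_negp: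
  "mulZW scale (negp h) F p q = Sum_any (\<lambda>ij. scale (zw_coeff h ij)
      (F (fst p + fst h + of_nat (fst ij), snd p + snd h + of_nat (snd ij))
         (fst q - of_nat (fst ij), snd q - of_nat (snd ij))))"
  by (simp add: mulZW_def negp_def zw_coeff_def)

lemma mulWZ_conv_mulZW:
  "mulWZ scale h F p q = scale (chk_sign h) (mulZW scale h (\<lambda>x y. F y x) q p)"
  by (simp add: mulWZ_def mulZW_def)

lemma chk_sign_nonzero: "chk_sign h \<noteq> (0::'k::field_char_0)"
  by (simp add: chk_sign_def)

lemma Sum_any_box:
  fixes G :: "nat \<times> nat \<Rightarrow> 'a::comm_monoid_add"
  assumes "\<And>i j. G (i, j) \<noteq> 0 \<Longrightarrow> i \<le> n1 \<and> j \<le> n2"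
  shows "Sum_any G = (\<Sum>i\<le>n1. \<Sum>j\<le>n2. G (i, j))"
proof -
  have "Sum_any G = sum G ({..n1} \<times> {..n2})"
    by (rule Sum_any.expand_superset) (use assms in auto)
  then show ?thesis by (simp add: sum.cartesian_product)
qed

lemma Sum_any_eq_single:
  fixes G :: "'b \<Rightarrow> 'a::comm_monoid_add"
  assumes "\<And>y. G y \<noteq> 0 \<Longrightarrow> y = x"
  shows "Sum_any G = G x"
  using Sum_any.expand_superset[of "{x}" G] assms by auto

definition int_pair :: "'k::field_char_0 \<times> 'k \<Rightarrow> bool" where
  "int_pair q \<longleftrightarrow> fst q \<in> \<int> \<and> snd q \<in> \<int>"

lemma in_trans_0_iff: "in_trans (0, 0) q \<longleftrightarrow> (\<exists>i j::nat. q = (of_nat i, of_nat j))"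
  by (simp add: in_trans_def)

lemma in_trans_0_int_pair: "in_trans (0, 0) q \<Longrightarrow> int_pair q"
  by (auto simp: in_trans_def int_pair_def)

lemma int_pair_add_nat: "int_pair (fst q + of_nat i, snd q + of_nat j) \<longleftrightarrow> int_pair q"
  using Ints_diff[of "fst q + of_nat i" "of_nat i"] Ints_diff[of "snd q + of_nat j" "of_nat j"]
  by (auto simp: int_pair_def)

lemma int_pair_diff_nat: "int_pair (fst q - of_nat i, snd q - of_nat j) \<longleftrightarrow> int_pair q"
  using Ints_add[of "fst q - of_nat i" "of_nat i"] Ints_add[of "snd q - of_nat j" "of_nat j"]
  by (auto simp: int_pair_def)

lemma int_pair_diff:
  assumes "int_pair x" "int_pair y"
  shows "\<exists>k l::int. fst x - fst y = of_int k \<and> snd x - snd y = of_int l"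
proof -
  have "fst x - fst y \<in> \<int>" "snd x - snd y \<in> \<int>"
    using assms by (auto simp: int_pair_def)
  then show ?thesis by (auto elim!: Ints_cases)
qed

lemma chkK_fst_diff_notin_Ints:
  assumes "x \<in> chkK" "y \<in> chkK"
    and "\<not> (\<exists>k l::int. fst x - fst y = of_int k \<and> snd x - snd y = of_int l)"
  shows "fst x - fst y \<notin> (\<int>::'k::field_char_0 set)"
proof
  assume "fst x - fst y \<in> \<int>"
  then obtain k where k: "fst x - fst y = of_int k" by (auto elim: Ints_cases)
  obtain a b where "fst x - snd x = of_int a" "fst y - snd y = of_int b"
    using assms(1,2) unfolding chkK_def by blast
  with k have "snd x - snd y = of_int (k - a + b)" by (simp add: algebra_simps)
  with k assms(3) show False by blast
qed

lemma in_trans_nat_shift_finite: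
  fixes x1 x2 :: "'k::field_char_0"
  shows "finite {n::nat \<times> nat. in_trans k (x1 - of_nat (fst n), x2 - of_nat (snd n))}"
    (is "finite ?T")
proof (cases "?T = {}")
  case False
  then obtain n0 c1 c2 where "(x1 - of_nat (fst n0), x2 - of_nat (snd n0)) = (fst k + of_nat c1, snd k + of_nat c2)"
    unfolding in_trans_def by blast
  then have x: "x1 = fst k + of_nat (fst n0 + c1)" "x2 = snd k + of_nat (snd n0 + c2)"
    by (auto simp: algebra_simps)
  have "?T \<subseteq> {..fst n0 + c1} \<times> {..snd n0 + c2}"
  proof
    fix n assume "n \<in> ?T"
    then obtain d1 d2 :: nat where
      "(of_nat (fst n0 + c1) :: 'k) = of_nat (fst n + d1)" "(of_nat (snd n0 + c2) :: 'k) = of_nat (snd n + d2)"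
      unfolding in_trans_def x by (auto simp: algebra_simps)
    then have "fst n0 + c1 = fst n + d1" "snd n0 + c2 = snd n + d2"
      by (simp_all only: of_nat_eq_iff)
    then show "n \<in> {..fst n0 + c1} \<times> {..snd n0 + c2}" by (cases n) auto
  qed
  then show ?thesis by (rule finite_subset) simp
qed simp

lemma vseries2_finite_antidiagonal:
  assumes "vseries2 (F :: 'k::field_char_0 \<times> 'k \<Rightarrow> 'k \<times> 'k \<Rightarrow> 'v::zero)"
  shows "finite {f. F (c1 - fst f, c2 - snd f) f \<noteq> 0}"
proof -
  obtain H where H: "finite H" "\<forall>p q. F p q \<noteq> 0 \<longrightarrow> (\<exists>hk\<in>H. in_trans (fst hk) p \<and> in_trans (snd hk) q)"
    using assms unfolding vseries2_def by blast
  define S where "S hk = {f. in_trans (fst hk) (c1 - fst f, c2 - snd f) \<and> in_trans (snd hk) f}" for hk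
  have "finite (S hk)" for hk
  proof -
    define e where "e n = (fst (snd hk) + of_nat (fst n), snd (snd hk) + of_nat (snd n))" for n :: "nat \<times> nat"
    have "S hk \<subseteq> e ` {n. in_trans (fst hk) (c1 - fst (snd hk) - of_nat (fst n), c2 - snd (snd hk) - of_nat (snd n))}"
    proof
      fix f assume f: "f \<in> S hk"
      then obtain b1 b2 :: nat where "f = e (b1, b2)"
        unfolding S_def e_def in_trans_def by auto
      with f show "f \<in> e ` {n. in_trans (fst hk) (c1 - fst (snd hk) - of_nat (fst n), c2 - snd (snd hk) - of_nat (snd n))}"
        by (intro image_eqI[of _ _ "(b1, b2)"]) (auto simp: S_def e_def algebra_simps)
    qed
    then show ?thesis using in_trans_nat_shift_finite finite_subset by blast
  qed
  moreover have "{f. F (c1 - fst f, c2 - snd f) f \<noteq> 0} \<subseteq> (\<Union>hk\<in>H. S hk)"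
    using H(2) unfolding S_def by fastforce
  ultimately show ?thesis using H(1) by (meson finite_UN_I finite_subset)
qed

lemma vseries2_finite_below:
  assumes "vseries2 (F :: 'k::field_char_0 \<times> 'k \<Rightarrow> 'k \<times> 'k \<Rightarrow> 'v::zero)"
  shows "finite {n::nat \<times> nat. \<exists>p. F p (x1 - of_nat (fst n), x2 - of_nat (snd n)) \<noteq> 0}"
proof -
  obtain H where H: "finite H" "\<forall>p q. F p q \<noteq> 0 \<longrightarrow> (\<exists>hk\<in>H. in_trans (fst hk) p \<and> in_trans (snd hk) q)"
    using assms unfolding vseries2_def by blast
  then have "{n. \<exists>p. F p (x1 - of_nat (fst n), x2 - of_nat (snd n)) \<noteq> 0}
      \<subseteq> (\<Union>hk\<in>H. {n. in_trans (snd hk) (x1 - of_nat (fst n), x2 - of_nat (snd n))})"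
    by fastforce
  then show ?thesis by (rule finite_subset) (intro finite_UN_I H(1) in_trans_nat_shift_finite)
qed

lemma vseries2_swap: "vseries2 F \<Longrightarrow> vseries2 (\<lambda>x y. F y x)"
  unfolding vseries2_def by (metis (no_types, lifting) finite_imageI fst_swap image_eqI snd_swap)

lemma vseries2_mono: "vseries2 F \<Longrightarrow> (\<And>p q. G p q \<noteq> 0 \<Longrightarrow> F p q \<noteq> 0) \<Longrightarrow> vseries2 G"
  unfolding vseries2_def by metis

lemma finite_translate_bounded_below:
  fixes S :: "('k::field_char_0 \<times> 'k) set" and x1 x2 :: 'k
  assumes "finite S"
  obtains M :: nat where
    "\<And>k1 k2::int. (x1 + of_int k1, x2 + of_int k2) \<in> S \<Longrightarrow> - int M \<le> k1 \<and> - int M \<le> k2"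
proof -
  define K where "K = (\<lambda>k::int \<times> int. (x1 + of_int (fst k), x2 + of_int (snd k))) -` S"
  have "finite K"
    unfolding K_def using assms by (rule finite_vimageI) (auto intro!: injI simp: prod_eq_iff)
  define A where "A = insert 0 ((\<lambda>k. nat \<bar>fst k\<bar>) ` K \<union> (\<lambda>k. nat \<bar>snd k\<bar>) ` K)"
  have "finite A" using \<open>finite K\<close> by (simp add: A_def)
  have "- int (Max A) \<le> k1 \<and> - int (Max A) \<le> k2" if "(x1 + of_int k1, x2 + of_int k2) \<in> S" for k1 k2
  proof -
    from that have "(k1, k2) \<in> K" by (simp add: K_def)
    then have "nat \<bar>k1\<bar> \<in> (\<lambda>k. nat \<bar>fst k\<bar>) ` K" "nat \<bar>k2\<bar> \<in> (\<lambda>k. nat \<bar>snd k\<bar>) ` K"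
      by (rule rev_image_eqI, simp)+
    then have "nat \<bar>k1\<bar> \<in> A" "nat \<bar>k2\<bar> \<in> A" by (simp_all add: A_def)
    then have "nat \<bar>k1\<bar> \<le> Max A" "nat \<bar>k2\<bar> \<le> Max A"
      using Max_ge[OF \<open>finite A\<close>] by blast+
    then show ?thesis by linarith
  qed
  then show thesis by (rule that)
qed

section \<open>Uniqueness of expansions in powers of \<open>z - w\<close>\<close>

context vector_space
begin

lemma exists_linear_functional:
  assumes "v \<noteq> 0"
  obtains \<phi> where "Vector_Spaces.linear scale (*) \<phi>" and "\<phi> v \<noteq> 0"
proof -
  have "independent {v}" using assms by simp
  then obtain B where B: "{v} \<subseteq> B" "independent B" "UNIV \<subseteq> span B"
    using maximal_independent_subset_extend[of "{v}" UNIV] by auto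
  then have lin: "Vector_Spaces.linear scale (*) (\<lambda>x. representation B x v)"
    using linear_representation by auto
  have "representation B v v = 1"
    using representation_basis[OF B(2)] B(1) by simp
  then show thesis using that[OF lin] by simp
qed

lemma Sum_any_scale_right: "Sum_any (\<lambda>x. scale c (f x)) = scale c (Sum_any f)"
proof (cases "c = 0")
  case False
  then have supp: "{x. scale c (f x) \<noteq> 0} = {x. f x \<noteq> 0}" by simp
  show ?thesis
  proof (cases "finite {x. f x \<noteq> 0}")
    case True
    then show ?thesis unfolding Sum_any.expand_set supp by (simp add: scale_sum_right)
  qed (use supp in simp)
qed simp

end

locale vector_space_char_0 = vector_space scale
  for scale :: "'k::field_char_0 \<Rightarrow> 'v::ab_group_add \<Rightarrow> 'v"
begin

lemma mulZW_scale_right: "mulZW scale h (\<lambda>x y. scale c (F x y)) p q = scale c (mulZW scale h F p q)"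
  unfolding mulZW_def by (simp add: Sum_any_scale_right[symmetric] mult.commute)

lemma mulZW_nonzero_obtain:
  assumes "mulZW scale (negp h) F p q \<noteq> 0"
  obtains i j :: nat
  where "F (fst p + fst h + of_nat i, snd p + snd h + of_nat j) (fst q - of_nat i, snd q - of_nat j) \<noteq> 0"
proof -
  from assms[unfolded mulZW_negp] obtain ij where
    "scale (zw_coeff h ij) (F (fst p + fst h + of_nat (fst ij), snd p + snd h + of_nat (snd ij))
         (fst q - of_nat (fst ij), snd q - of_nat (snd ij))) \<noteq> 0"
    by (rule Sum_any.not_neutral_obtains_not_neutral)
  then show thesis using that by (cases ij) auto
qed

lemma mulZW_at_nat:
  assumes "\<And>x y. F x y \<noteq> 0 \<Longrightarrow> in_trans (0, 0) y"
  shows "mulZW scale (negp h) F p (of_nat n1, of_nat n2) = (\<Sum>j1\<le>n1. \<Sum>j2\<le>n2.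
     scale (zw_coeff h (j1, j2))
       (F (fst p + fst h + of_nat j1, snd p + snd h + of_nat j2) (of_nat (n1 - j1), of_nat (n2 - j2))))"
proof -
  have "j1 \<le> n1 \<and> j2 \<le> n2"
    if nz: "F (fst p + fst h + of_nat j1, snd p + snd h + of_nat j2) (of_nat n1 - of_nat j1, of_nat n2 - of_nat j2) \<noteq> 0"
    for j1 j2
  proof -
    obtain m1 m2 :: nat where "(of_nat n1 - of_nat j1 :: 'k) = of_nat m1" "(of_nat n2 - of_nat j2 :: 'k) = of_nat m2"
      using assms[OF nz] unfolding in_trans_def by auto
    then have "(of_nat n1 :: 'k) = of_nat (j1 + m1)" "(of_nat n2 :: 'k) = of_nat (j2 + m2)"
      by (simp_all add: algebra_simps)
    then show ?thesis by (simp only: of_nat_eq_iff) simp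
  qed
  then show ?thesis
    unfolding mulZW_negp by (subst Sum_any_box) (auto intro!: sum.cong simp: of_nat_diff)
qed

lemma mulZW_at_non_nat:
  assumes "\<And>x y. F x y \<noteq> 0 \<Longrightarrow> in_trans (0, 0) y" and "\<not> in_trans (0, 0) q"
  shows "mulZW scale (negp h) F p q = 0"
proof (rule ccontr)
  assume "mulZW scale (negp h) F p q \<noteq> 0"
  then obtain i j :: nat
    where "F (fst p + fst h + of_nat i, snd p + snd h + of_nat j) (fst q - of_nat i, snd q - of_nat j) \<noteq> 0"
    by (rule mulZW_nonzero_obtain)
  then obtain m1 m2 :: nat where "fst q - of_nat i = of_nat m1" "snd q - of_nat j = of_nat m2"
    using assms(1) unfolding in_trans_def by fastforce
  then have "q = (of_nat (m1 + i), of_nat (m2 + j))" by (simp add: prod_eq_iff algebra_simps)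
  then have "in_trans (0, 0) q" unfolding in_trans_def by (intro exI[of _ "m1 + i"] exI[of _ "m2 + j"]) simp
  with assms(2) show False ..
qed

text \<open>The hypothesis \<open>conv\<close> says \<open>\<Sum>\<^sub>i (1 - X)\<^sup>\<alpha>\<^sup>i U\<^sub>i(X) = 0\<close> for the \<open>V\<close>-valued polynomials
  \<open>U\<^sub>i = \<Sum>\<^sub>n u i n X\<^sup>n\<close>; a linear functional that is nonzero on a given coefficient reduces
  this to the scalar case.\<close>
lemma binomial_convolution_eq_0:
  fixes u :: "nat \<Rightarrow> nat \<Rightarrow> 'v" and \<alpha> :: "nat \<Rightarrow> 'k"
  assumes fin: "\<And>i. i < r \<Longrightarrow> finite {n. u i n \<noteq> 0}"
    and dist: "\<forall>i<r. \<forall>j<r. i \<noteq> j \<longrightarrow> \<alpha> i - \<alpha> j \<notin> \<int>"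
    and conv: "\<And>n. (\<Sum>i<r. \<Sum>j\<le>n. scale ((-1) ^ j * (\<alpha> i gchoose j)) (u i (n - j))) = 0"
    and "i0 < r"
  shows "u i0 n0 = 0"
proof (rule ccontr)
  assume "u i0 n0 \<noteq> 0"
  then obtain \<phi> where lin: "Vector_Spaces.linear scale (*) \<phi>" and \<phi>0: "\<phi> (u i0 n0) \<noteq> 0"
    by (rule exists_linear_functional)
  interpret \<phi>: module_hom scale "(*)" \<phi> by (rule module_hom_linearI[OF lin])
  define L where "L = Suc (Max (insert 0 (\<Union>i<r. {n. u i n \<noteq> 0})))"
  have u_beyond_L: "u i n = 0" if "i < r" "L \<le> n" for i n
  proof (rule ccontr)
    assume "u i n \<noteq> 0"
    with that(1) have "n \<le> Max (insert 0 (\<Union>i<r. {n. u i n \<noteq> 0}))"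
      using fin by (intro Max_ge) auto
    with that(2) show False by (simp add: L_def)
  qed
  define Q where "Q i = Poly (map (\<lambda>k. (-1) ^ k * \<phi> (u i k)) [0..<L])" for i
  have coeff_Q: "coeff (Q i) k = (-1) ^ k * \<phi> (u i k)" if "i < r" for i k
    using u_beyond_L[OF that, of k] by (cases "k < L") (simp_all add: Q_def nth_default_def)
  have "(\<Sum>i<r. fps_binomial (\<alpha> i) * fps_of_poly (Q i)) = 0"
  proof (rule fps_ext)
    fix n
    have sign: "(-1::'k) ^ (n - j) = (-1) ^ n * (-1) ^ j" if "j \<le> n" for j
      by (simp add: power_add flip: neg_one_power_add_eq_neg_one_power_diff[OF that])
    have "(\<Sum>i<r. fps_binomial (\<alpha> i) * fps_of_poly (Q i)) $ n
        = (\<Sum>i<r. \<Sum>j=0..n. (\<alpha> i gchoose j) * ((-1) ^ (n - j) * \<phi> (u i (n - j))))"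
      by (simp add: fps_sum_nth fps_mult_nth coeff_Q)
    also have "\<dots> = (-1) ^ n * (\<Sum>i<r. \<Sum>j\<le>n. ((-1) ^ j * (\<alpha> i gchoose j)) * \<phi> (u i (n - j)))"
      unfolding sum_distrib_left atLeast0AtMost by (intro sum.cong refl) (simp add: sign)
    also have "\<dots> = (-1) ^ n * \<phi> (\<Sum>i<r. \<Sum>j\<le>n. scale ((-1) ^ j * (\<alpha> i gchoose j)) (u i (n - j)))"
      by (simp add: \<phi>.sum \<phi>.scale)
    finally show "(\<Sum>i<r. fps_binomial (\<alpha> i) * fps_of_poly (Q i)) $ n = 0 $ n"
      by (simp add: conv \<phi>.zero)
  qed
  with dist \<open>i0 < r\<close> have "Q i0 = 0" using fps_binomial_poly_sum_eq_0 by blast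
  then show False using coeff_Q[OF \<open>i0 < r\<close>, of n0] \<phi>0 by simp
qed

lemma binomial_convolution2_eq_0:
  fixes u :: "nat \<Rightarrow> nat \<times> nat \<Rightarrow> 'v"
  assumes fin: "\<And>i. i < r \<Longrightarrow> finite {n. u i n \<noteq> 0}"
    and dist: "\<forall>i<r. \<forall>j<r. i \<noteq> j \<longrightarrow> fst (h i) - fst (h j) \<notin> \<int>"
    and conv: "\<And>n1 n2. (\<Sum>i<r. \<Sum>j1\<le>n1. \<Sum>j2\<le>n2.
                  scale (zw_coeff (h i) (j1, j2)) (u i (n1 - j1, n2 - j2))) = 0"
    and "i0 < r"
  shows "u i0 n0 = 0"
proof (rule ccontr)
  assume "u i0 n0 \<noteq> 0"
  define P where "P k \<longleftrightarrow> (\<exists>i<r. \<exists>n1. u i (n1, k) \<noteq> 0)" for k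
  define k0 where "k0 = (LEAST k. P k)"
  have "P (snd n0)" unfolding P_def using \<open>i0 < r\<close> \<open>u i0 n0 \<noteq> 0\<close> by (metis prod.collapse)
  then have "P k0" unfolding k0_def by (rule LeastI)
  have below_k0: "u i (n1, k) = 0" if "i < r" "k < k0" for i n1 k
    using not_less_Least[of k P] that unfolding k0_def P_def by blast
  text \<open>In the lowest nonzero row \<open>w\<^sup>k\<^sup>0\<close> only the terms with \<open>j2 = 0\<close> survive.\<close>
  have row: "(\<Sum>i<r. \<Sum>j1\<le>n1. scale ((-1) ^ j1 * ((- fst (h i)) gchoose j1)) (u i (n1 - j1, k0))) = 0" for n1
  proof -
    have "(\<Sum>j2\<le>k0. scale (zw_coeff (h i) (j1, j2)) (u i (n1 - j1, k0 - j2)))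
        = scale ((-1) ^ j1 * ((- fst (h i)) gchoose j1)) (u i (n1 - j1, k0))" if "i < r" for i j1
      by (subst sum.remove[of _ 0]) (auto intro!: sum.neutral below_k0[OF that] simp: zw_coeff_def)
    then show ?thesis using conv[of n1 k0] by simp
  qed
  have "u i (n1, k0) = 0" if "i < r" for i n1
  proof (rule binomial_convolution_eq_0[where u="\<lambda>i n1. u i (n1, k0)"])
    show "finite {n1. u i (n1, k0) \<noteq> 0}" if "i < r" for i
      using finite_vimageI[OF fin[OF that], of "\<lambda>n1. (n1, k0)"] by (simp add: inj_on_def vimage_def)
    have "- fst (h i) - - fst (h j) = fst (h j) - fst (h i)" for i j by simp
    with dist show "\<forall>i<r. \<forall>j<r. i \<noteq> j \<longrightarrow> - fst (h i) - - fst (h j) \<notin> \<int>" by metis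
  qed (use row that in auto)
  with \<open>P k0\<close> show False unfolding P_def by blast
qed

lemma Sum_any_zw_coeff_shift:
  assumes "\<And>k1 k2::int. g (B1 + of_int k1, B2 + of_int k2) \<noteq> 0 \<Longrightarrow> 0 \<le> k1 \<and> 0 \<le> k2"
  shows "Sum_any (\<lambda>ij. scale (zw_coeff h ij) (g (B1 + of_nat n1 - of_nat (fst ij), B2 + of_nat n2 - of_nat (snd ij))))
    = (\<Sum>j1\<le>n1. \<Sum>j2\<le>n2. scale (zw_coeff h (j1, j2)) (g (B1 + of_nat (n1 - j1), B2 + of_nat (n2 - j2))))"
proof (subst Sum_any_box)
  fix j1 j2
  assume "scale (zw_coeff h (j1, j2))
    (g (B1 + of_nat n1 - of_nat (fst (j1, j2)), B2 + of_nat n2 - of_nat (snd (j1, j2)))) \<noteq> 0"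
  then have "g (B1 + of_int (int n1 - int j1), B2 + of_int (int n2 - int j2)) \<noteq> 0"
    by (simp add: algebra_simps)
  from assms[OF this] show "j1 \<le> n1 \<and> j2 \<le> n2" by simp
qed (auto intro!: sum.cong simp: of_nat_diff algebra_simps)

text \<open>Along an antidiagonal (fixed total degree) the coefficient identities become a lattice
  convolution, because \<open>(z - w)\<^sup>-\<^sup>h\<close> is homogeneous.\<close>
lemma sum_mulZW_eq_0_imp_eq_0:
  fixes G :: "nat \<Rightarrow> 'k \<times> 'k \<Rightarrow> 'k \<times> 'k \<Rightarrow> 'v"
  assumes vs: "\<And>i. i < r \<Longrightarrow> vseries2 (G i)"
    and dist: "\<forall>i<r. \<forall>j<r. i \<noteq> j \<longrightarrow> fst (h i) - fst (h j) \<notin> \<int>"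
    and eq: "\<And>p q. (\<Sum>i<r. mulZW scale (negp (h i)) (G i) p q) = 0"
    and "i0 < r"
  shows "G i0 p0 q0 = 0"
proof (rule ccontr)
  assume G0: "G i0 p0 q0 \<noteq> 0"
  define t1 where "t1 = fst p0 + fst q0 - fst (h i0)"
  define t2 where "t2 = snd p0 + snd q0 - snd (h i0)"
  define g where "g i f = G i (t1 + fst (h i) - fst f, t2 + snd (h i) - snd f) f" for i f
  have g_eq: "(\<Sum>i<r. Sum_any (\<lambda>ij. scale (zw_coeff (h i) ij)
       (g i (fst q - of_nat (fst ij), snd q - of_nat (snd ij))))) = 0" for q
  proof -
    have "mulZW scale (negp (h i)) (G i) (t1 - fst q, t2 - snd q) q =
      Sum_any (\<lambda>ij. scale (zw_coeff (h i) ij) (g i (fst q - of_nat (fst ij), snd q - of_nat (snd ij))))" for i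
      unfolding mulZW_negp g_def by (rule Sum_any.cong) (simp add: algebra_simps)
    then show ?thesis using eq[of "(t1 - fst q, t2 - snd q)" q] by simp
  qed
  have g_fin: "finite {f. g i f \<noteq> 0}" if "i < r" for i
    unfolding g_def using vseries2_finite_antidiagonal[OF vs[OF that]] by simp
  have "finite (\<Union>i<r. {f. g i f \<noteq> 0})" using g_fin by simp
  then obtain M where M: "\<And>k1 k2::int. (fst q0 + of_int k1, snd q0 + of_int k2) \<in> (\<Union>i<r. {f. g i f \<noteq> 0})
      \<Longrightarrow> - int M \<le> k1 \<and> - int M \<le> k2"
    by (rule finite_translate_bounded_below[of _ "fst q0" "snd q0"]) blast
  define B1 where "B1 = fst q0 - of_nat M"
  define B2 where "B2 = snd q0 - of_nat M"
  have g_below: "0 \<le> k1 \<and> 0 \<le> k2" if "i < r" "g i (B1 + of_int k1, B2 + of_int k2) \<noteq> 0" for i k1 k2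
    using M[of "k1 - int M" "k2 - int M"] that by (auto simp: B1_def B2_def algebra_simps)
  define u where "u i n = g i (B1 + of_nat (fst n), B2 + of_nat (snd n))" for i n
  have "u i0 (M, M) = 0"
  proof (rule binomial_convolution2_eq_0[OF _ dist _ \<open>i0 < r\<close>])
    show "finite {n. u i n \<noteq> 0}" if "i < r" for i
      using finite_vimageI[OF g_fin[OF that], of "\<lambda>n. (B1 + of_nat (fst n), B2 + of_nat (snd n))"]
      by (simp add: u_def vimage_def inj_on_def prod_eq_iff)
    fix n1 n2
    have "Sum_any (\<lambda>ij. scale (zw_coeff (h i) ij)
         (g i (B1 + of_nat n1 - of_nat (fst ij), B2 + of_nat n2 - of_nat (snd ij))))
       = (\<Sum>j1\<le>n1. \<Sum>j2\<le>n2. scale (zw_coeff (h i) (j1, j2)) (u i (n1 - j1, n2 - j2)))" if "i < r" for i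
      unfolding u_def fst_conv snd_conv using g_below[OF that] by (rule Sum_any_zw_coeff_shift)
    with g_eq[of "(B1 + of_nat n1, B2 + of_nat n2)"]
    show "(\<Sum>i<r. \<Sum>j1\<le>n1. \<Sum>j2\<le>n2. scale (zw_coeff (h i) (j1, j2)) (u i (n1 - j1, n2 - j2))) = 0"
      by simp
  qed
  with G0 show False by (simp add: u_def g_def B1_def B2_def t1_def t2_def)
qed

end

lemma gbinomial_of_nat_nonzero_imp_le: "(of_nat x :: 'k::field_char_0) gchoose k \<noteq> 0 \<Longrightarrow> k \<le> x"
  by (metis binomial_gbinomial binomial_eq_0 not_le of_nat_0)

lemma nat_shift_gbinomial_nonzero:
  assumes "x + of_nat k = (of_nat m :: 'k::field_char_0)" and "(x + of_nat k) gchoose k \<noteq> 0"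
  obtains n where "x = of_nat n"
proof -
  from assms have "k \<le> m" using gbinomial_of_nat_nonzero_imp_le by metis
  with assms(1) have "x = of_nat (m - k)" by (simp add: of_nat_diff algebra_simps)
  then show thesis by (rule that)
qed

lemma Sum_any_if_of_nat_pair:
  fixes X :: "nat \<times> nat \<Rightarrow> 'a::comm_monoid_add" and x1 x2 :: "'k::field_char_0"
  assumes "\<And>k. x1 = of_nat (fst k) \<Longrightarrow> x2 = of_nat (snd k) \<Longrightarrow> X k = Y"
    and "\<not> (\<exists>k. x1 = of_nat (fst k) \<and> x2 = of_nat (snd k)) \<Longrightarrow> Y = 0"
  shows "Sum_any (\<lambda>k. if x1 = of_nat (fst k) \<and> x2 = of_nat (snd k) then X k else 0) = Y"
proof (cases "\<exists>k. x1 = of_nat (fst k) \<and> x2 = of_nat (snd k)")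
  case True
  then obtain k0 where k0: "x1 = of_nat (fst k0)" "x2 = of_nat (snd k0)" by blast
  then have "(x1 = of_nat (fst k) \<and> x2 = of_nat (snd k)) \<longleftrightarrow> k = k0" for k
    by (auto simp: prod_eq_iff)
  then show ?thesis using assms(1)[OF k0] by simp
qed (use assms(2) in auto)

context vector_space_char_0
begin

lemma diag_der_term_support:
  assumes cre: "\<And>p q. F p q \<noteq> 0 \<Longrightarrow> in_trans (0, 0) p \<and> in_trans (0, 0) q"
    and nz: "scale (((fst p + of_nat ka) gchoose ka) * ((snd p + of_nat kb) gchoose kb))
               (F (fst p + of_nat ka, snd p + of_nat kb) (fst e - fst p, snd e - snd p)) \<noteq> 0"
  shows "in_trans (0, 0) p" and "in_trans (0, 0) (fst e - fst p, snd e - snd p)"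
proof -
  from nz have "(fst p + of_nat ka) gchoose ka \<noteq> 0" "(snd p + of_nat kb) gchoose kb \<noteq> 0"
    and F: "F (fst p + of_nat ka, snd p + of_nat kb) (fst e - fst p, snd e - snd p) \<noteq> 0"
    by auto
  moreover obtain x1 x2 :: nat where "fst p + of_nat ka = of_nat x1" "snd p + of_nat kb = of_nat x2"
    using cre[OF F] unfolding in_trans_def by auto
  ultimately obtain n1 n2 where "fst p = of_nat n1" "snd p = of_nat n2"
    by (metis nat_shift_gbinomial_nonzero)
  then show "in_trans (0, 0) p" by (simp add: in_trans_0_iff prod_eq_iff)
  show "in_trans (0, 0) (fst e - fst p, snd e - snd p)" using cre[OF F] ..
qed

lemma diag_der_support:
  assumes cre: "\<And>p q. F p q \<noteq> 0 \<Longrightarrow> in_trans (0, 0) p \<and> in_trans (0, 0) q"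
    and "diag_der scale ka kb F e \<noteq> 0"
  shows "in_trans (0, 0) e"
proof -
  obtain p where nz: "scale (((fst p + of_nat ka) gchoose ka) * ((snd p + of_nat kb) gchoose kb))
      (F (fst p + of_nat ka, snd p + of_nat kb) (fst e - fst p, snd e - snd p)) \<noteq> 0"
    using assms(2) unfolding diag_der_def by (rule Sum_any.not_neutral_obtains_not_neutral)
  obtain i j k l :: nat where "p = (of_nat i, of_nat j)" "(fst e - fst p, snd e - snd p) = (of_nat k, of_nat l)"
    using diag_der_term_support[where F = F, OF cre nz] unfolding in_trans_0_iff by blast
  then have "e = (of_nat (i + k), of_nat (j + l))" by (auto simp: prod_eq_iff algebra_simps)
  then show ?thesis unfolding in_trans_0_iff by blast
qed

lemma diag_der_at_0:
  assumes cre: "\<And>p q. F p q \<noteq> 0 \<Longrightarrow> in_trans (0, 0) p \<and> in_trans (0, 0) q"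
  shows "diag_der scale ka kb F (0, 0) = F (of_nat ka, of_nat kb) (0, 0)"
proof -
  have "p = (0, 0)"
    if nz: "scale (((fst p + of_nat ka) gchoose ka) * ((snd p + of_nat kb) gchoose kb))
      (F (fst p + of_nat ka, snd p + of_nat kb) (fst (0::'k, 0::'k) - fst p, snd (0::'k, 0::'k) - snd p)) \<noteq> 0"
    for p
  proof -
    obtain i j k l :: nat where "p = (of_nat i, of_nat j)" "(- fst p, - snd p) = (of_nat k, of_nat l)"
      using diag_der_term_support[where F = F, OF cre nz] unfolding in_trans_0_iff by auto
    then have "(of_nat (i + k) :: 'k) = 0" "(of_nat (j + l) :: 'k) = 0"
      by (auto simp: prod_eq_iff) (metis eq_neg_iff_add_eq_0 add.commute)+
    with \<open>p = (of_nat i, of_nat j)\<close> show ?thesis by (simp only: of_nat_eq_0_iff) simp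
  qed
  then show ?thesis
    unfolding diag_der_def by (subst Sum_any_eq_single) (auto simp flip: binomial_gbinomial)
qed

text \<open>A coefficient of \<open>F\<close> whose \<open>w\<close>-exponent is lowest within its class mod \<open>\<nat>\<^sup>2\<close> meets
  only the leading term of \<open>(z - w)\<^sup>-\<^sup>h\<close>, so it reappears unchanged in \<open>(z - w)\<^sup>-\<^sup>h F\<close>.\<close>
lemma mulZW_lowest_coeff:
  assumes vs: "vseries2 F" and "F p0 q0 \<noteq> 0"
  obtains p :: "'k \<times> 'k" and a b :: nat
  where "F p (fst q0 - of_nat a, snd q0 - of_nat b) \<noteq> 0"
    and "mulZW scale (negp h) F (fst p - fst h, snd p - snd h) (fst q0 - of_nat a, snd q0 - of_nat b)
           = F p (fst q0 - of_nat a, snd q0 - of_nat b)"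
proof -
  define D where "D = {ab::nat \<times> nat. \<exists>p. F p (fst q0 - of_nat (fst ab), snd q0 - of_nat (snd ab)) \<noteq> 0}"
  have "finite D" unfolding D_def by (rule vseries2_finite_below[OF vs])
  have "(0, 0) \<in> D" unfolding D_def using assms(2) by (cases p0) auto
  have bounded: "\<forall>y. y \<in> D \<longrightarrow> fst y + snd y < Suc (Max ((\<lambda>y. fst y + snd y) ` D))"
    using \<open>finite D\<close> by (auto simp: le_imp_less_Suc)
  obtain ab where "ab \<in> D" and ab_max: "\<forall>y\<in>D. fst y + snd y \<le> fst ab + snd ab"
    using ex_has_greatest_nat[of "\<lambda>y. y \<in> D", OF \<open>(0, 0) \<in> D\<close> bounded] by blast
  then obtain p where nz: "F p (fst q0 - of_nat (fst ab), snd q0 - of_nat (snd ab)) \<noteq> 0"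
    unfolding D_def by blast
  have "ij = (0, 0)"
    if "scale (zw_coeff h ij) (F (fst p + of_nat (fst ij), snd p + of_nat (snd ij))
          (fst q0 - of_nat (fst ab) - of_nat (fst ij), snd q0 - of_nat (snd ab) - of_nat (snd ij))) \<noteq> 0"
    for ij
  proof -
    from that have "(fst ab + fst ij, snd ab + snd ij) \<in> D"
      unfolding D_def by (auto simp: algebra_simps)
    with ab_max show ?thesis by (cases ij) fastforce
  qed
  then have "mulZW scale (negp h) F (fst p - fst h, snd p - snd h) (fst q0 - of_nat (fst ab), snd q0 - of_nat (snd ab))
      = F p (fst q0 - of_nat (fst ab), snd q0 - of_nat (snd ab))"
    unfolding mulZW_negp by (subst Sum_any_eq_single) (auto simp: zw_coeff_def)
  with nz show thesis by (rule that)
qed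

lemma nat_w_support_of_mulZW:
  assumes vs: "vseries2 F"
    and mul_supp: "\<And>p q. mulZW scale (negp h) F p q \<noteq> 0 \<Longrightarrow> in_trans (0, 0) q"
    and "F p0 q0 \<noteq> 0"
  shows "in_trans (0, 0) q0"
proof -
  obtain p a b where "F p (fst q0 - of_nat a, snd q0 - of_nat b) \<noteq> 0"
    and "mulZW scale (negp h) F (fst p - fst h, snd p - snd h) (fst q0 - of_nat a, snd q0 - of_nat b)
           = F p (fst q0 - of_nat a, snd q0 - of_nat b)"
    using mulZW_lowest_coeff[OF vs \<open>F p0 q0 \<noteq> 0\<close>] by blast
  then obtain i j :: nat where "(fst q0 - of_nat a, snd q0 - of_nat b) = (of_nat i, of_nat j)"
    using mul_supp unfolding in_trans_0_iff by metis
  then have "q0 = (of_nat (i + a), of_nat (j + b))" by (auto simp: prod_eq_iff algebra_simps)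
  then show ?thesis unfolding in_trans_0_iff by blast
qed

lemma mulZW_int_pair_filter:
  "mulZW scale (negp h) (\<lambda>x y. if int_pair y then 0 else F x y) p q
     = (if int_pair q then 0 else mulZW scale (negp h) F p q)"
  unfolding mulZW_negp by (cases "int_pair q") (simp_all add: int_pair_diff_nat)

end

section \<open>Creativity of the numerators\<close>

locale creative_local_pair = vector_space_char_0 scale
  for scale :: "'k::field_char_0 \<Rightarrow> 'v::ab_group_add \<Rightarrow> 'v" +
  fixes \<sigma> :: "'v \<Rightarrow> 'v" and one :: 'v and a b :: "('k, 'v) dist1"
    and r :: nat and h :: "nat \<Rightarrow> 'k \<times> 'k" and c :: "nat \<Rightarrow> ('k, 'v) dist2"
  assumes local_data: "local_data scale \<sigma> a b r h c"
    and pole_orders_incongruent: "\<forall>i<r. \<forall>j<r. i \<noteq> j \<longrightarrow>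
        \<not> (\<exists>k l::int. fst (h i) - fst (h j) = of_int k \<and> snd (h i) - snd (h j) = of_int l)"
    and End_a: "End_dist1 scale a" and End_b: "End_dist1 scale b"
    and creative_a: "creative1 one a" and creative_b: "creative1 one b"
begin

definition num_one :: "nat \<Rightarrow> 'k \<times> 'k \<Rightarrow> 'k \<times> 'k \<Rightarrow> 'v" where
  "num_one i = ser2 (c i) one"

lemma vseries2_num_one: "i < r \<Longrightarrow> vseries2 (num_one i)"
  using local_data unfolding local_data_def field2_def num_one_def by blast

lemma pole_orders_fst_incongruent: "\<forall>i<r. \<forall>j<r. i \<noteq> j \<longrightarrow> fst (h i) - fst (h j) \<notin> \<int>"
proof (intro allI impI)
  fix i j assume "i < r" "j < r" "i \<noteq> j"
  moreover have "\<forall>i<r. h i \<in> chkK" using local_data unfolding local_data_def by blast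
  ultimately show "fst (h i) - fst (h j) \<notin> \<int>"
    using pole_orders_incongruent by (intro chkK_fst_diff_notin_Ints) simp_all
qed

lemma a_linear: "Vector_Spaces.linear scale scale (a n)"
  using End_a unfolding End_dist1_def by blast

lemma b_linear: "Vector_Spaces.linear scale scale (b n)"
  using End_b unfolding End_dist1_def by blast

lemma a_b_one: "a (negm1 p) (b (negm1 q) one) = (\<Sum>i<r. mulZW scale (negp (h i)) (num_one i) p q)"
  using local_data unfolding local_data_def num_one_def by blast

lemma nat_w_support_a_b_one:
  assumes "(\<Sum>i<r. mulZW scale (negp (h i)) (num_one i) p q) \<noteq> 0"
  shows "in_trans (0, 0) q"
proof -
  interpret a: module_hom scale scale "a (negm1 p)" by (rule module_hom_linearI[OF a_linear])
  from assms have "b (negm1 q) one \<noteq> 0" by (auto simp flip: a_b_one)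
  then show ?thesis using creative_b[unfolded creative1_def, rule_format, of "negm1 q"] by simp
qed

lemma nat_z_support_b_a_one:
  assumes "(\<Sum>i<r. mulWZ scale (negp (h i)) (num_one i) p q) \<noteq> 0"
  shows "in_trans (0, 0) p"
proof -
  interpret b: module_hom scale scale "b (negm1 q)" by (rule module_hom_linearI[OF b_linear])
  obtain s where "scale s (b (negm1 q) (a (negm1 p) one)) = (\<Sum>i<r. mulWZ scale (negp (h i)) (num_one i) p q)"
    using local_data unfolding local_data_def num_one_def by blast
  with assms have "a (negm1 p) one \<noteq> 0" by auto
  then show ?thesis using creative_a[unfolded creative1_def, rule_format, of "negm1 p"] by simp
qed

lemma num_one_int_pair_w:
  assumes "i < r" and "num_one i p q \<noteq> 0"
  shows "int_pair q"
proof -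
  define G where "G = (\<lambda>i x y. if int_pair y then 0 else num_one i x y)"
  have filtered: "mulZW scale (negp (h i)) (G i) p q
      = (if int_pair q then 0 else mulZW scale (negp (h i)) (num_one i) p q)" for i p q
    using mulZW_int_pair_filter[of "h i" "num_one i" p q] by (simp add: G_def)
  have "(\<Sum>i<r. mulZW scale (negp (h i)) (G i) p q) = 0" for p q
  proof (cases "int_pair q")
    case False
    then show ?thesis
      using nat_w_support_a_b_one[of p q] in_trans_0_int_pair[of q] by (auto simp: filtered)
  qed (simp add: filtered)
  moreover have "vseries2 (G i)" if "i < r" for i
    using vseries2_num_one[OF that] by (rule vseries2_mono) (simp add: G_def split: if_splits)
  ultimately have "G i p q = 0"
    using sum_mulZW_eq_0_imp_eq_0[OF _ pole_orders_fst_incongruent _ \<open>i < r\<close>] by blast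
  with assms(2) show ?thesis by (simp add: G_def split: if_splits)
qed

lemma num_one_int_pair_z:
  assumes "i < r" and "num_one i p q \<noteq> 0"
  shows "int_pair p"
proof -
  define G where "G = (\<lambda>i x y. scale (chk_sign (negp (h i))) (if int_pair y then 0 else num_one i y x))"
  have filtered: "mulZW scale (negp (h i)) (G i) q p
      = (if int_pair p then 0 else mulWZ scale (negp (h i)) (num_one i) p q)" for i p q
    using mulZW_int_pair_filter[of "h i" "\<lambda>x y. num_one i y x" q p]
    by (simp add: G_def mulZW_scale_right mulWZ_conv_mulZW)
  have "(\<Sum>i<r. mulZW scale (negp (h i)) (G i) q p) = 0" for p q
  proof (cases "int_pair p")
    case False
    then show ?thesis
      using nat_z_support_b_a_one[of p q] in_trans_0_int_pair[of p] by (auto simp: filtered)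
  qed (simp add: filtered)
  moreover have "vseries2 (G i)" if "i < r" for i
    using vseries2_swap[OF vseries2_num_one[OF that]] by (rule vseries2_mono) (simp add: G_def split: if_splits)
  ultimately have "G i q p = 0"
    using sum_mulZW_eq_0_imp_eq_0[OF _ pole_orders_fst_incongruent _ \<open>i < r\<close>] by blast
  with assms(2) show ?thesis by (simp add: G_def chk_sign_nonzero split: if_splits)
qed

lemma sum_eq_separated_term:
  fixes X :: "nat \<Rightarrow> 'v"
  assumes "i < r" and "X i \<noteq> 0"
    and cls: "\<And>j. j < r \<Longrightarrow> X j \<noteq> 0 \<Longrightarrow> int_pair (fst x + fst (h j), snd x + snd (h j))"
  shows "(\<Sum>j<r. X j) = X i"
proof -
  have "X j = 0" if "j < r" "j \<noteq> i" for j
  proof (rule ccontr)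
    assume "X j \<noteq> 0"
    from int_pair_diff[OF cls[OF assms(1,2)] cls[OF that(1) this]]
    have "\<exists>k l::int. fst (h i) - fst (h j) = of_int k \<and> snd (h i) - snd (h j) = of_int l" by simp
    with pole_orders_incongruent assms(1) that show False by blast
  qed
  then show ?thesis using assms(1) by (subst sum.remove[of _ i]) (auto intro!: sum.neutral)
qed

lemma nat_w_support_mulZW_num_one:
  assumes "i < r" and "mulZW scale (negp (h i)) (num_one i) p q \<noteq> 0"
  shows "in_trans (0, 0) q"
proof -
  have "int_pair (fst p + fst (h j), snd p + snd (h j))"
    if j: "j < r" and nz: "mulZW scale (negp (h j)) (num_one j) p q \<noteq> 0" for j
  proof -
    obtain k l :: nat where "num_one j (fst p + fst (h j) + of_nat k, snd p + snd (h j) + of_nat l)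
        (fst q - of_nat k, snd q - of_nat l) \<noteq> 0"
      using nz by (rule mulZW_nonzero_obtain)
    with j show ?thesis
      using num_one_int_pair_z int_pair_add_nat[of "(fst p + fst (h j), snd p + snd (h j))"] by force
  qed
  then have "(\<Sum>j<r. mulZW scale (negp (h j)) (num_one j) p q) = mulZW scale (negp (h i)) (num_one i) p q"
    by (rule sum_eq_separated_term[where X = "\<lambda>j. mulZW scale (negp (h j)) (num_one j) p q", OF assms])
  with assms(2) show ?thesis using nat_w_support_a_b_one[of p q] by simp
qed

lemma nat_z_support_mulWZ_num_one:
  assumes "i < r" and "mulWZ scale (negp (h i)) (num_one i) p q \<noteq> 0"
  shows "in_trans (0, 0) p"
proof -
  have "int_pair (fst q + fst (h j), snd q + snd (h j))"
    if j: "j < r" and nz: "mulWZ scale (negp (h j)) (num_one j) p q \<noteq> 0" for j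
  proof -
    have "mulZW scale (negp (h j)) (\<lambda>x y. num_one j y x) q p \<noteq> 0"
      using nz by (simp add: mulWZ_conv_mulZW)
    then obtain k l :: nat where "num_one j (fst p - of_nat k, snd p - of_nat l)
        (fst q + fst (h j) + of_nat k, snd q + snd (h j) + of_nat l) \<noteq> 0"
      by (rule mulZW_nonzero_obtain)
    with j show ?thesis
      using num_one_int_pair_w int_pair_add_nat[of "(fst q + fst (h j), snd q + snd (h j))"] by force
  qed
  then have "(\<Sum>j<r. mulWZ scale (negp (h j)) (num_one j) p q) = mulWZ scale (negp (h i)) (num_one i) p q"
    by (rule sum_eq_separated_term[where X = "\<lambda>j. mulWZ scale (negp (h j)) (num_one j) p q", OF assms])
  with assms(2) show ?thesis using nat_z_support_b_a_one[of p q] by simp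
qed

lemma num_one_creative:
  assumes "i < r" and "num_one i p q \<noteq> 0"
  shows "in_trans (0, 0) p \<and> in_trans (0, 0) q"
proof
  show "in_trans (0, 0) q"
    using nat_w_support_of_mulZW[OF vseries2_num_one[OF assms(1)] nat_w_support_mulZW_num_one[OF assms(1)] assms(2)] .
  have "mulWZ scale (negp (h i)) (num_one i) y x \<noteq> 0"
    if "mulZW scale (negp (h i)) (\<lambda>x y. num_one i y x) x y \<noteq> 0" for x y
    using that by (simp add: mulWZ_conv_mulZW chk_sign_nonzero)
  then show "in_trans (0, 0) p"
    using nat_w_support_of_mulZW[OF vseries2_swap[OF vseries2_num_one[OF assms(1)]], of "h i" p q]
      nat_z_support_mulWZ_num_one[OF assms(1)] assms(2) by blast
qed

lemma creative2_numerators: "i < r \<Longrightarrow> creative2 one (c i)"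
  using num_one_creative[of i "negm1 _" "negm1 _"] unfolding creative2_def num_one_def ser2_def by simp

lemma a_s1_b: "a (negm1 p) (s1 one b) = (\<Sum>i<r. num_one i (fst p + fst (h i), snd p + snd (h i)) (0, 0))"
proof -
  have "mulZW scale (negp (h i)) (num_one i) p (of_nat 0, of_nat 0)
      = num_one i (fst p + fst (h i), snd p + snd (h i)) (0, 0)" if "i < r" for i
    using mulZW_at_nat[of "num_one i" "h i" p 0 0] num_one_creative[OF that]
    by (simp add: zw_coeff_def)
  moreover have "s1 one b = b (negm1 (of_nat 0, of_nat 0)) one" by (simp add: s1_def negm1_def)
  ultimately show ?thesis by (simp add: a_b_one)
qed

text \<open>\<open>\<Phi>\<close> describes the diagonal derivatives of the numerators at the exponent \<open>e\<close>: it is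
  the identity for \<open>e = 0\<close> and a coefficient of \<open>e\<^sup>w\<^sup>T\<close> in general.\<close>
lemma nth_prod_one:
  assumes diag: "\<And>i ka kb. i < r \<Longrightarrow> diag_der scale ka kb (num_one i) e = \<Phi> (num_one i (of_nat ka, of_nat kb) (0, 0))"
    and "\<Phi> 0 = 0"
  shows "nth_prod scale r h c n (negm1 e) one
           = (\<Sum>i<r. \<Phi> (num_one i (fst (h i) - 1 - fst n, snd (h i) - 1 - snd n) (0, 0)))"
  unfolding nth_prod_def negm1_negm1 num_one_def[symmetric]
proof (rule sum.cong[OF refl], rule Sum_any_if_of_nat_pair)
  fix i k assume "i \<in> {..<r}" "fst (h i) - 1 - fst n = of_nat (fst k)" "snd (h i) - 1 - snd n = of_nat (snd k)"
  then show "diag_der scale (fst k) (snd k) (num_one i) e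
      = \<Phi> (num_one i (fst (h i) - 1 - fst n, snd (h i) - 1 - snd n) (0, 0))"
    by (simp add: diag)
next
  fix i assume "i \<in> {..<r}" "\<nexists>k. fst (h i) - 1 - fst n = of_nat (fst k) \<and> snd (h i) - 1 - snd n = of_nat (snd k)"
  then have "num_one i (fst (h i) - 1 - fst n, snd (h i) - 1 - snd n) (0, 0) = 0"
    using num_one_creative unfolding in_trans_0_iff by fastforce
  with \<open>\<Phi> 0 = 0\<close> show "\<Phi> (num_one i (fst (h i) - 1 - fst n, snd (h i) - 1 - snd n) (0, 0)) = 0" by simp
qed

lemma s1_nth_prod: "s1 one (nth_prod scale r h c n) = (\<Sum>i<r. num_one i (fst (h i) - 1 - fst n, snd (h i) - 1 - snd n) (0, 0))"
proof -
  have "negm1 ((0, 0) :: 'k \<times> 'k) = (-1, -1)" by (simp add: negm1_def)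
  then show ?thesis
    using nth_prod_one[of "(0, 0)" id n] diag_der_at_0 num_one_creative by (simp add: s1_def)
qed

lemma s1_nth_prod_eq: "s1 one (nth_prod scale r h c n) = a n (s1 one b)"
  using a_s1_b[of "negm1 n"] by (simp add: s1_nth_prod negm1_def algebra_simps)

lemma creative1_nth_prod: "creative1 one (nth_prod scale r h c n)"
  unfolding creative1_def
proof (intro allI impI)
  fix m assume "nth_prod scale r h c n m one \<noteq> 0"
  then obtain i where "i \<in> {..<r}" and "Sum_any (\<lambda>k.
      if fst (h i) - 1 - fst n = of_nat (fst k) \<and> snd (h i) - 1 - snd n = of_nat (snd k)
      then diag_der scale (fst k) (snd k) (num_one i) (negm1 m) else 0) \<noteq> 0"
    unfolding nth_prod_def num_one_def[symmetric] by (rule sum.not_neutral_contains_not_neutral)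
  moreover from this(2) obtain k where "(if fst (h i) - 1 - fst n = of_nat (fst k) \<and> snd (h i) - 1 - snd n = of_nat (snd k)
      then diag_der scale (fst k) (snd k) (num_one i) (negm1 m) else 0) \<noteq> 0"
    by (rule Sum_any.not_neutral_obtains_not_neutral)
  ultimately have "i < r" "diag_der scale (fst k) (snd k) (num_one i) (negm1 m) \<noteq> 0"
    by (auto split: if_splits)
  then show "in_trans (0, 0) (negm1 m)"
    using diag_der_support[OF num_one_creative[OF \<open>i < r\<close>]] by blast
qed

end

section \<open>Translation covariance\<close>

sublocale vector_space_char_0 \<subseteq> lin: vector_space_pair scale scale ..

lemma (in vector_space_char_0) linear_expW:
  assumes T: "Vector_Spaces.linear scale scale T" and Tb: "Vector_Spaces.linear scale scale Tb"
  shows "Vector_Spaces.linear scale scale (expW T Tb i j)"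
proof -
  interpret T: module_hom scale scale T by (rule module_hom_linearI[OF T])
  interpret Tb: module_hom scale scale Tb by (rule module_hom_linearI[OF Tb])
  have "expW T Tb i j (x + y) = expW T Tb i j x + expW T Tb i j y \<and>
      expW T Tb i j (scale u x) = scale u (expW T Tb i j x)" for x y u
  proof (induction i arbitrary: j)
    case 0
    show ?case by (induction j) (simp_all add: Tb.add Tb.scale)
  next
    case (Suc i)
    show ?case
      by (induction j) (use Suc.IH in \<open>simp_all add: T.add T.scale Tb.add Tb.scale scale_right_distrib algebra_simps\<close>)
  qed
  then have "module_hom scale scale (expW T Tb i j)"
    by unfold_locales simp_all
  then show ?thesis by (simp add: Vector_Spaces.linear_iff_module_hom)
qed

lemma (in vector_space_char_0) diag_der_at_nat:
  assumes cre: "\<And>p q. F p q \<noteq> 0 \<Longrightarrow> in_trans (0, 0) p \<and> in_trans (0, 0) q"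
  shows "diag_der scale k1 k2 F (of_nat e1, of_nat e2) = (\<Sum>P1\<le>e1. \<Sum>P2\<le>e2.
     scale (of_nat ((P1 + k1) choose k1) * of_nat ((P2 + k2) choose k2))
       (F (of_nat (P1 + k1), of_nat (P2 + k2)) (of_nat (e1 - P1), of_nat (e2 - P2))))"
proof -
  define emb :: "nat \<times> nat \<Rightarrow> 'k \<times> 'k" where "emb P = (of_nat (fst P), of_nat (snd P))" for P
  define trm where "trm p = scale (((fst p + of_nat k1) gchoose k1) * ((snd p + of_nat k2) gchoose k2))
      (F (fst p + of_nat k1, snd p + of_nat k2)
         (fst (of_nat e1 :: 'k, of_nat e2 :: 'k) - fst p, snd (of_nat e1 :: 'k, of_nat e2 :: 'k) - snd p))" for p
  have "{p. trm p \<noteq> 0} \<subseteq> emb ` ({..e1} \<times> {..e2})"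
  proof
    fix p assume "p \<in> {p. trm p \<noteq> 0}"
    then have nz: "trm p \<noteq> 0" by simp
    obtain i j :: nat where p: "p = (of_nat i, of_nat j)"
      using diag_der_term_support(1)[where F = F, OF cre nz[unfolded trm_def]] unfolding in_trans_0_iff by blast
    obtain k l :: nat where "(of_nat e1 - fst p, of_nat e2 - snd p) = (of_nat k, of_nat l)"
      using diag_der_term_support(2)[where F = F, OF cre nz[unfolded trm_def]] unfolding in_trans_0_iff by auto
    with p have "(of_nat e1 :: 'k) = of_nat (i + k)" "(of_nat e2 :: 'k) = of_nat (j + l)"
      by (simp_all add: algebra_simps)
    then have "e1 = i + k" "e2 = j + l" by (simp_all only: of_nat_eq_iff)
    with p show "p \<in> emb ` ({..e1} \<times> {..e2})"
      unfolding emb_def by (intro image_eqI[of _ _ "(i, j)"]) simp_all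
  qed
  then have "diag_der scale k1 k2 F (of_nat e1, of_nat e2) = sum trm (emb ` ({..e1} \<times> {..e2}))"
    unfolding diag_der_def trm_def by (intro Sum_any.expand_superset) simp_all
  also have "\<dots> = (\<Sum>P\<in>{..e1} \<times> {..e2}. trm (emb P))"
    by (rule sum.reindex[unfolded comp_def]) (auto simp: inj_on_def emb_def prod_eq_iff)
  also have "\<dots> = (\<Sum>P1\<le>e1. \<Sum>P2\<le>e2. trm (emb (P1, P2)))"
    by (simp add: sum.cartesian_product)
  also have "\<dots> = (\<Sum>P1\<le>e1. \<Sum>P2\<le>e2.
     scale (of_nat ((P1 + k1) choose k1) * of_nat ((P2 + k2) choose k2))
       (F (of_nat (P1 + k1), of_nat (P2 + k2)) (of_nat (e1 - P1), of_nat (e2 - P2))))"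
    by (intro sum.cong refl) (simp add: emb_def trm_def of_nat_diff binomial_gbinomial)
  finally show ?thesis .
qed

lemma gbinomial_step_sign:
  fixes G1 G0 B X :: "'k::comm_ring_1"
  assumes "X * G0 = of_nat l * G0 + of_nat (Suc l) * G1"
  shows "of_nat (Suc l) * ((-1)^(Suc l + m) * G1 * B) = - (X - of_nat l) * ((-1)^(l + m) * G0 * B)"
proof -
  have e: "of_nat (Suc l) * G1 = (X - of_nat l) * G0" using assms by (simp add: algebra_simps)
  have "of_nat (Suc l) * ((-1)^(Suc l + m) * G1 * B) = - ((-1)^(l + m) * B) * (of_nat (Suc l) * G1)"
    by (simp add: algebra_simps)
  also have "\<dots> = - (X - of_nat l) * ((-1)^(l + m) * G0 * B)" unfolding e by (simp add: algebra_simps)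
  finally show ?thesis .
qed

lemma gbinomial_step_sign_commuted:
  fixes G1 G0 B X :: "'k::comm_ring_1"
  assumes "X * G0 = of_nat l * G0 + of_nat (Suc l) * G1"
  shows "of_nat (Suc l) * ((-1)^(m + Suc l) * B * G1) = - (X - of_nat l) * ((-1)^(m + l) * B * G0)"
  using gbinomial_step_sign[OF assms, of m B] by (simp add: algebra_simps)

lemma sum_triangle_reindex:
  fixes g :: "nat \<Rightarrow> nat \<Rightarrow> 'a::comm_monoid_add" and n :: nat
  shows "(\<Sum>j\<le>n. \<Sum>q\<le>n - j. g j q) = (\<Sum>u\<le>n. \<Sum>j\<le>u. g j (u - j))"
proof -
  have "(\<Sum>j\<le>n. \<Sum>q\<le>n - j. g j q) = (\<Sum>(j, q)\<in>{(j, q). j + q \<le> n}. g j q)"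
  proof -
    have "{(j, q). j + q \<le> n} = Sigma {..n} (\<lambda>j. {..n - j})" by auto
    then show ?thesis by (simp add: sum.Sigma)
  qed
  also have "\<dots> = (\<Sum>u\<le>n. \<Sum>j\<le>u. g j (u - j))" by (rule sum.triangle_reindex_eq)
  finally show ?thesis .
qed

lemma sum_triangle_reindex2:
  fixes F :: "nat \<Rightarrow> nat \<Rightarrow> nat \<Rightarrow> nat \<Rightarrow> 'a::comm_monoid_add"
  shows "(\<Sum>j1\<le>n1. \<Sum>j2\<le>n2. \<Sum>q1\<le>n1 - j1. \<Sum>q2\<le>n2 - j2. F j1 j2 q1 q2)
   = (\<Sum>u1\<le>n1. \<Sum>u2\<le>n2. \<Sum>j1\<le>u1. \<Sum>j2\<le>u2. F j1 j2 (u1 - j1) (u2 - j2))"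
proof -
  have "(\<Sum>j1\<le>n1. \<Sum>j2\<le>n2. \<Sum>q1\<le>n1 - j1. \<Sum>q2\<le>n2 - j2. F j1 j2 q1 q2)
      = (\<Sum>j1\<le>n1. \<Sum>q1\<le>n1 - j1. \<Sum>j2\<le>n2. \<Sum>q2\<le>n2 - j2. F j1 j2 q1 q2)"
    by (rule sum.cong[OF refl]) (rule sum.swap)
  also have "\<dots> = (\<Sum>u1\<le>n1. \<Sum>j1\<le>u1. \<Sum>u2\<le>n2. \<Sum>j2\<le>u2. F j1 j2 (u1 - j1) (u2 - j2))"
    by (simp only: sum_triangle_reindex)
  also have "\<dots> = (\<Sum>u1\<le>n1. \<Sum>u2\<le>n2. \<Sum>j1\<le>u1. \<Sum>j2\<le>u2. F j1 j2 (u1 - j1) (u2 - j2))"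
    by (rule sum.cong[OF refl]) (rule sum.swap)
  finally show ?thesis .
qed

lemma gbinomial_Vandermonde_alternating:
  fixes hh y :: "'k::field_char_0"
  shows "(\<Sum>j\<le>u. ((-1)^j * ((- hh) gchoose j)) * ((-1)^(u - j) * ((y + hh + of_nat u) gchoose (u - j))))
    = (-1)^u * ((y + of_nat u) gchoose u)"
proof -
  have "(\<Sum>j\<le>u. ((-1)^j * ((- hh) gchoose j)) * ((-1)^(u - j) * ((y + hh + of_nat u) gchoose (u - j))))
      = (\<Sum>j\<le>u. (-1)^u * (((- hh) gchoose j) * ((y + hh + of_nat u) gchoose (u - j))))"
  proof (intro sum.cong refl)
    fix j assume "j \<in> {..u}"
    then have "(-1::'k)^j * (-1)^(u - j) = (-1)^u" by (simp add: power_add[symmetric])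
    then show "((-1)^j * ((- hh) gchoose j)) * ((-1)^(u - j) * ((y + hh + of_nat u) gchoose (u - j)))
        = (-1)^u * (((- hh) gchoose j) * ((y + hh + of_nat u) gchoose (u - j)))"
      by (metis (no_types, lifting) mult.assoc mult.left_commute)
  qed
  also have "\<dots> = (-1)^u * ((- hh + (y + hh + of_nat u)) gchoose u)"
  proof -
    have "(\<Sum>j\<le>u. ((- hh) gchoose j) * ((y + hh + of_nat u) gchoose (u - j))) = (- hh + (y + hh + of_nat u)) gchoose u"
      using gbinomial_Vandermonde[of "- hh" "y + hh + of_nat u" u] by (simp only: atLeast0AtMost)
    then show ?thesis by (simp only: sum_distrib_left[symmetric])
  qed
  finally show ?thesis by simp
qed

lemma zw_coeff_Vandermonde:
  fixes h :: "'k::field_char_0 \<times> 'k" and x1 x2 :: 'k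
  shows "(\<Sum>j1\<le>u1. \<Sum>j2\<le>u2. zw_coeff h (j1, j2) * ((-1) ^ ((u1 - j1) + (u2 - j2))
      * ((x1 + fst h + of_nat u1) gchoose (u1 - j1)) * ((x2 + snd h + of_nat u2) gchoose (u2 - j2))))
    = (-1) ^ (u1 + u2) * ((x1 + of_nat u1) gchoose u1) * ((x2 + of_nat u2) gchoose u2)"
proof -
  have "(\<Sum>j1\<le>u1. \<Sum>j2\<le>u2. zw_coeff h (j1, j2) * ((-1) ^ ((u1 - j1) + (u2 - j2))
      * ((x1 + fst h + of_nat u1) gchoose (u1 - j1)) * ((x2 + snd h + of_nat u2) gchoose (u2 - j2))))
    = (\<Sum>j1\<le>u1. ((-1)^j1 * ((- fst h) gchoose j1)) * ((-1)^(u1 - j1) * ((x1 + fst h + of_nat u1) gchoose (u1 - j1))))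
      * (\<Sum>j2\<le>u2. ((-1)^j2 * ((- snd h) gchoose j2)) * ((-1)^(u2 - j2) * ((x2 + snd h + of_nat u2) gchoose (u2 - j2))))"
    unfolding sum_product
    by (intro sum.cong refl) (simp only: power_add, simp add: zw_coeff_def power_add algebra_simps)
  also have "\<dots> = ((-1) ^ u1 * ((x1 + of_nat u1) gchoose u1)) * ((-1) ^ u2 * ((x2 + of_nat u2) gchoose u2))"
    by (simp only: gbinomial_Vandermonde_alternating)
  finally show ?thesis by (simp add: power_add algebra_simps)
qed

definition nat_pair_of :: "'k::field_char_0 \<times> 'k \<Rightarrow> nat \<times> nat" where
  "nat_pair_of y = (SOME n. y = (of_nat (fst n), of_nat (snd n)))"

lemma nat_pair_of_of_nat: "nat_pair_of ((of_nat n1, of_nat n2) :: 'k::field_char_0 \<times> 'k) = (n1, n2)"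
  unfolding nat_pair_of_def by (rule some_equality) (auto simp: prod_eq_iff)

lemma alternating_binomial_convolution: "(\<Sum>P\<le>u. of_nat ((P + k) choose k) * ((-1)^(u - P) * of_nat ((u + k) choose (u - P))))
    = (if u = 0 then 1 else (0::'k::field_char_0))"
proof -
  have "of_nat ((P + k) choose k) * ((-1)^(u - P) * of_nat ((u + k) choose (u - P)))
      = (of_nat ((u + k) choose k) * (-1)^u) * ((-1)^P * of_nat (u choose P) :: 'k)" if "P \<le> u" for P
  proof -
    have "(u + k) choose (u - P) = (u + k) choose (P + k)"
      using that binomial_symmetric[of "P + k" "u + k"] by simp
    moreover have "((u + k) choose (P + k)) * ((P + k) choose k) = ((u + k) choose k) * (u choose P)"
      using choose_mult[of k "P + k" "u + k"] that by simp
    ultimately have nat_eq: "((P + k) choose k) * ((u + k) choose (u - P)) = ((u + k) choose k) * (u choose P)"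
      by (simp add: mult.commute)
    have "(-1::'k)^(u - P) = (-1)^u * (-1)^P"
    proof -
      have "(-1::'k)^u = (-1)^(u - P) * (-1)^P" using that by (simp add: power_add[symmetric])
      then have "(-1::'k)^u * (-1)^P = (-1)^(u - P) * ((-1)^P * (-1)^P)" by simp
      also have "(-1::'k)^P * (-1)^P = 1" by (simp add: power_add[symmetric] flip: mult_2 power_even_eq)
      finally show ?thesis by simp
    qed
    then have "of_nat ((P + k) choose k) * ((-1)^(u - P) * of_nat ((u + k) choose (u - P)))
        = (-1)^u * (-1)^P * (of_nat (((P + k) choose k) * ((u + k) choose (u - P))) :: 'k)"
      by (simp add: algebra_simps)
    also have "\<dots> = (of_nat ((u + k) choose k) * (-1)^u) * ((-1)^P * of_nat (u choose P))"
      unfolding nat_eq by (simp add: algebra_simps)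
    finally show ?thesis .
  qed
  then have "(\<Sum>P\<le>u. of_nat ((P + k) choose k) * ((-1)^(u - P) * of_nat ((u + k) choose (u - P))))
      = (of_nat ((u + k) choose k) * (-1)^u) * (\<Sum>P\<le>u. (-1)^P * of_nat (u choose P) :: 'k)"
    by (simp add: sum_distrib_left)
  also have "\<dots> = (if u = 0 then 1 else 0)"
  proof (cases "u = 0")
    case True then show ?thesis by simp
  next
    case False then show ?thesis using choose_alternating_sum[of u] by simp
  qed
  finally show ?thesis .
qed

locale translation_covariant_pair = creative_local_pair scale \<sigma> one a b r h c
  for scale :: "'k::field_char_0 \<Rightarrow> 'v::ab_group_add \<Rightarrow> 'v"
    and \<sigma> one a b r h c +
  fixes T Tb :: "'v \<Rightarrow> 'v"
  assumes linear_T: "Vector_Spaces.linear scale scale T"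
    and linear_Tb: "Vector_Spaces.linear scale scale Tb"
    and translation_covariant: "transl_cov scale T Tb a"
    and strongly_creative_b: "strongly_creative scale one T Tb b"
begin

text \<open>The coefficient of z^q1 zbar^q2 in exp(z T + zbar Tbar), for q = (q1, q2).\<close>
definition expT :: "nat \<times> nat \<Rightarrow> 'v \<Rightarrow> 'v" where
  "expT q x = scale (inverse (fact (fst q + snd q))) (expW T Tb (fst q) (snd q) x)"

lemma linear_expT: "Vector_Spaces.linear scale scale (expT q)"
proof -
  have "module_hom scale scale (expT q)"
    by unfold_locales (simp_all add: expT_def lin.linear_add[OF linear_expW[OF linear_T linear_Tb]]
        lin.linear_scale[OF linear_expW[OF linear_T linear_Tb]] scale_right_distrib)
  then show ?thesis by (simp add: Vector_Spaces.linear_iff_module_hom)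
qed

lemma expT_0: "expT (0,0) x = x" by (simp add: expT_def)

lemma expT_rec: "scale (of_nat (q1 + q2)) (expT (q1, q2) x) =
   (if 0 < q1 then T (expT (q1 - 1, q2) x) else 0) + (if 0 < q2 then Tb (expT (q1, q2 - 1) x) else 0)"
proof (cases q1)
  case 0
  then show ?thesis
  proof (cases q2)
    case 0 then show ?thesis using \<open>q1 = 0\<close> by simp
  next
    case (Suc j)
    then show ?thesis using \<open>q1 = 0\<close>
      by (simp add: expT_def lin.linear_scale[OF linear_Tb] del: of_nat_Suc, (simp add: field_simps)?)
  qed
next
  case (Suc i)
  then show ?thesis
  proof (cases q2)
    case 0
    then show ?thesis using \<open>q1 = Suc i\<close>
      by (simp add: expT_def lin.linear_scale[OF linear_T] del: of_nat_Suc, (simp add: field_simps)?)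
  next
    case (Suc j)
    have fi: "of_nat (Suc n) * inverse (fact (Suc n) :: 'k) = inverse (fact n)" for n
      by (simp add: fact_Suc del: of_nat_Suc)
    have "scale (of_nat (q1 + q2)) (expT (q1, q2) x) = scale (of_nat (Suc (Suc (i + j))) * inverse (fact (Suc (Suc (i + j)))))
        (T (expW T Tb i (Suc j) x) + Tb (expW T Tb (Suc i) j x))"
      using Suc \<open>q1 = Suc i\<close> by (simp add: expT_def del: of_nat_Suc fact_Suc)
    also have "\<dots> = scale (inverse (fact (Suc (i + j)))) (T (expW T Tb i (Suc j) x) + Tb (expW T Tb (Suc i) j x))"
      by (simp only: fi)
    also have "\<dots> = T (expT (q1 - 1, q2) x) + Tb (expT (q1, q2 - 1) x)"
      using Suc \<open>q1 = Suc i\<close>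
      by (simp add: expT_def lin.linear_scale[OF linear_T] lin.linear_scale[OF linear_Tb] scale_right_distrib del: fact_Suc)
    finally show ?thesis using Suc \<open>q1 = Suc i\<close> by simp
  qed
qed

lemma a_T_commute: "a (negm1 p) (T y) = T (a (negm1 p) y) - scale (fst p + 1) (a (negm1 (fst p + 1, snd p)) y)"
proof -
  have "T (a (negm1 p) y) - a (negm1 p) (T y) = scale (- fst (negm1 p)) (a (fst (negm1 p) - 1, snd (negm1 p)) y)"
    using translation_covariant unfolding transl_cov_def by blast
  moreover have "(fst (negm1 p) - 1, snd (negm1 p)) = negm1 (fst p + 1, snd p)" by (simp add: negm1_def)
  moreover have "- fst (negm1 p) = fst p + 1" by (simp add: negm1_def)
  ultimately show ?thesis by (simp add: algebra_simps)
qed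

lemma a_Tb_commute: "a (negm1 p) (Tb y) = Tb (a (negm1 p) y) - scale (snd p + 1) (a (negm1 (fst p, snd p + 1)) y)"
proof -
  have "Tb (a (negm1 p) y) - a (negm1 p) (Tb y) = scale (- snd (negm1 p)) (a (fst (negm1 p), snd (negm1 p) - 1) y)"
    using translation_covariant unfolding transl_cov_def by blast
  moreover have "(fst (negm1 p), snd (negm1 p) - 1) = negm1 (fst p, snd p + 1)" by (simp add: negm1_def)
  moreover have "- snd (negm1 p) = snd p + 1" by (simp add: negm1_def)
  ultimately show ?thesis by (simp add: algebra_simps)
qed

text \<open>The coefficient of \<open>z\<^sup>p w\<^sup>l\<close> in \<open>a(z - w) x\<close>.\<close>
definition a_shift :: "'v \<Rightarrow> nat \<times> nat \<Rightarrow> 'k \<times> 'k \<Rightarrow> 'v" where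
  "a_shift x l p = scale ((-1) ^ (fst l + snd l) * ((fst p + of_nat (fst l)) gchoose fst l) * ((snd p + of_nat (snd l)) gchoose snd l))
      (a (negm1 (fst p + of_nat (fst l), snd p + of_nat (snd l))) x)"

lemma a_shift_Suc_fst: "scale (of_nat (Suc l1)) (a_shift x (Suc l1, l2) p) = scale (- (fst p + 1)) (a_shift x (l1, l2) (fst p + 1, snd p))"
proof -
  define X where "X = fst p + of_nat (Suc l1)"
  define B where "B = (snd p + of_nat l2) gchoose l2"
  have A: "a_shift x (Suc l1, l2) p = scale ((-1)^(Suc l1 + l2) * (X gchoose Suc l1) * B) (a (negm1 (X, snd p + of_nat l2)) x)"
    by (simp only: a_shift_def fst_conv snd_conv X_def B_def)
  have eqX: "fst p + 1 + of_nat l1 = X" by (simp add: X_def)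
  have B': "a_shift x (l1, l2) (fst p + 1, snd p) = scale ((-1)^(l1 + l2) * (X gchoose l1) * B) (a (negm1 (X, snd p + of_nat l2)) x)"
    by (simp only: a_shift_def fst_conv snd_conv eqX B_def)
  have Xl: "X - of_nat l1 = fst p + 1" by (simp add: X_def)
  show ?thesis unfolding A B' scale_scale
    by (simp only: gbinomial_step_sign[OF gbinomial_mult_1[of X l1]] Xl)
qed

lemma a_shift_Suc_snd: "scale (of_nat (Suc l2)) (a_shift x (l1, Suc l2) p) = scale (- (snd p + 1)) (a_shift x (l1, l2) (fst p, snd p + 1))"
proof -
  define X where "X = snd p + of_nat (Suc l2)"
  define B where "B = (fst p + of_nat l1) gchoose l1"
  have A: "a_shift x (l1, Suc l2) p = scale ((-1)^(l1 + Suc l2) * B * (X gchoose Suc l2)) (a (negm1 (fst p + of_nat l1, X)) x)"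
    by (simp only: a_shift_def fst_conv snd_conv X_def B_def)
  have eqX: "snd p + 1 + of_nat l2 = X" by (simp add: X_def)
  have B': "a_shift x (l1, l2) (fst p, snd p + 1) = scale ((-1)^(l1 + l2) * B * (X gchoose l2)) (a (negm1 (fst p + of_nat l1, X)) x)"
    by (simp only: a_shift_def fst_conv snd_conv eqX B_def)
  have Xl: "X - of_nat l2 = snd p + 1" by (simp add: X_def)
  show ?thesis unfolding A B' scale_scale
    by (simp only: gbinomial_step_sign_commuted[OF gbinomial_mult_1[of X l2]] Xl)
qed

text \<open>The coefficient of \<open>z\<^sup>p w\<^sup>q\<close> in \<open>e\<^sup>w\<^sup>T a(z - w) x\<close>.\<close>
definition exp_a_shift :: "'v \<Rightarrow> nat \<Rightarrow> nat \<Rightarrow> 'k \<times> 'k \<Rightarrow> 'v" where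
  "exp_a_shift x q1 q2 p = (\<Sum>l1\<le>q1. \<Sum>l2\<le>q2. expT (q1 - l1, q2 - l2) (a_shift x (l1, l2) p))"

lemma exp_a_shift_split: "scale (of_nat (q1 + q2)) (exp_a_shift x q1 q2 p) =
    (\<Sum>l1\<le>q1. \<Sum>l2\<le>q2. if l1 < q1 then T (expT (q1 - l1 - 1, q2 - l2) (a_shift x (l1,l2) p)) else 0)
  + (\<Sum>l1\<le>q1. \<Sum>l2\<le>q2. if l2 < q2 then Tb (expT (q1 - l1, q2 - l2 - 1) (a_shift x (l1,l2) p)) else 0)
  + (\<Sum>l1\<le>q1. \<Sum>l2\<le>q2. expT (q1 - l1, q2 - l2) (scale (of_nat l1) (a_shift x (l1,l2) p)))
  + (\<Sum>l1\<le>q1. \<Sum>l2\<le>q2. expT (q1 - l1, q2 - l2) (scale (of_nat l2) (a_shift x (l1,l2) p)))"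
proof -
  have trm: "scale (of_nat (q1 + q2)) (expT (q1 - l1, q2 - l2) (a_shift x (l1, l2) p)) =
      (if l1 < q1 then T (expT (q1 - l1 - 1, q2 - l2) (a_shift x (l1,l2) p)) else 0)
    + (if l2 < q2 then Tb (expT (q1 - l1, q2 - l2 - 1) (a_shift x (l1,l2) p)) else 0)
    + expT (q1 - l1, q2 - l2) (scale (of_nat l1) (a_shift x (l1,l2) p))
    + expT (q1 - l1, q2 - l2) (scale (of_nat l2) (a_shift x (l1,l2) p))"
    if "l1 \<le> q1" "l2 \<le> q2" for l1 l2
  proof -
    have n: "(of_nat (q1 + q2) :: 'k) = of_nat ((q1 - l1) + (q2 - l2)) + of_nat l1 + of_nat l2"
      using that by (simp add: of_nat_diff)
    have "scale (of_nat (q1 + q2)) (expT (q1 - l1, q2 - l2) (a_shift x (l1, l2) p)) =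
        scale (of_nat ((q1 - l1) + (q2 - l2))) (expT (q1 - l1, q2 - l2) (a_shift x (l1, l2) p))
      + expT (q1 - l1, q2 - l2) (scale (of_nat l1) (a_shift x (l1,l2) p))
      + expT (q1 - l1, q2 - l2) (scale (of_nat l2) (a_shift x (l1,l2) p))"
      unfolding n by (simp add: scale_left_distrib lin.linear_scale[OF linear_expT])
    also have "scale (of_nat ((q1 - l1) + (q2 - l2))) (expT (q1 - l1, q2 - l2) (a_shift x (l1, l2) p)) =
        (if l1 < q1 then T (expT (q1 - l1 - 1, q2 - l2) (a_shift x (l1,l2) p)) else 0)
      + (if l2 < q2 then Tb (expT (q1 - l1, q2 - l2 - 1) (a_shift x (l1,l2) p)) else 0)"
      unfolding expT_rec using that by simp
    finally show ?thesis .
  qed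
  show ?thesis unfolding exp_a_shift_def scale_sum_right
    apply (simp only: sum.distrib[symmetric])
    apply (intro sum.cong refl)
    apply (simp only: trm atMost_iff)
    done
qed

lemma exp_a_shift_T_sum: "(\<Sum>l1\<le>q1. \<Sum>l2\<le>q2. if l1 < q1 then T (expT (q1 - l1 - 1, q2 - l2) (a_shift x (l1,l2) p)) else 0)
    = (if 0 < q1 then T (exp_a_shift x (q1 - 1) q2 p) else 0)"
proof (cases q1)
  case 0 then show ?thesis by simp
next
  case (Suc m)
  have "(\<Sum>l1\<le>q1. \<Sum>l2\<le>q2. if l1 < q1 then T (expT (q1 - l1 - 1, q2 - l2) (a_shift x (l1,l2) p)) else 0)
      = (\<Sum>l1\<le>m. \<Sum>l2\<le>q2. T (expT (m - l1, q2 - l2) (a_shift x (l1,l2) p)))"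
    unfolding Suc sum.atMost_Suc by (simp add: Suc_diff_le)
  also have "\<dots> = T (exp_a_shift x m q2 p)" unfolding exp_a_shift_def by (simp add: lin.linear_sum[OF linear_T])
  finally show ?thesis using Suc by simp
qed

lemma exp_a_shift_Tb_sum: "(\<Sum>l1\<le>q1. \<Sum>l2\<le>q2. if l2 < q2 then Tb (expT (q1 - l1, q2 - l2 - 1) (a_shift x (l1,l2) p)) else 0)
    = (if 0 < q2 then Tb (exp_a_shift x q1 (q2 - 1) p) else 0)"
proof (cases q2)
  case 0 then show ?thesis by simp
next
  case (Suc m)
  have "(\<Sum>l1\<le>q1. \<Sum>l2\<le>q2. if l2 < q2 then Tb (expT (q1 - l1, q2 - l2 - 1) (a_shift x (l1,l2) p)) else 0)
      = (\<Sum>l1\<le>q1. \<Sum>l2\<le>m. Tb (expT (q1 - l1, m - l2) (a_shift x (l1,l2) p)))"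
    unfolding Suc sum.atMost_Suc by (simp add: Suc_diff_le)
  also have "\<dots> = Tb (exp_a_shift x q1 m p)" unfolding exp_a_shift_def by (simp add: lin.linear_sum[OF linear_Tb])
  finally show ?thesis using Suc by simp
qed

lemma exp_a_shift_fst_weight_sum: "(\<Sum>l1\<le>q1. \<Sum>l2\<le>q2. expT (q1 - l1, q2 - l2) (scale (of_nat l1) (a_shift x (l1,l2) p)))
    = (if 0 < q1 then scale (- (fst p + 1)) (exp_a_shift x (q1 - 1) q2 (fst p + 1, snd p)) else 0)"
proof (cases q1)
  case 0 then show ?thesis by (simp add: lin.linear_0[OF linear_expT])
next
  case (Suc m)
  have "(\<Sum>l1\<le>q1. \<Sum>l2\<le>q2. expT (q1 - l1, q2 - l2) (scale (of_nat l1) (a_shift x (l1,l2) p)))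
      = (\<Sum>l1\<le>m. \<Sum>l2\<le>q2. expT (m - l1, q2 - l2) (scale (of_nat (Suc l1)) (a_shift x (Suc l1,l2) p)))"
    unfolding Suc sum.atMost_Suc_shift by (simp add: lin.linear_0[OF linear_expT] del: of_nat_Suc)
  also have "\<dots> = (\<Sum>l1\<le>m. \<Sum>l2\<le>q2. scale (- (fst p + 1)) (expT (m - l1, q2 - l2) (a_shift x (l1,l2) (fst p + 1, snd p))))"
    by (simp only: a_shift_Suc_fst lin.linear_scale[OF linear_expT])
  also have "\<dots> = scale (- (fst p + 1)) (exp_a_shift x m q2 (fst p + 1, snd p))"
    unfolding exp_a_shift_def by (simp add: scale_sum_right)
  finally show ?thesis using Suc by simp
qed

lemma exp_a_shift_snd_weight_sum: "(\<Sum>l1\<le>q1. \<Sum>l2\<le>q2. expT (q1 - l1, q2 - l2) (scale (of_nat l2) (a_shift x (l1,l2) p)))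
    = (if 0 < q2 then scale (- (snd p + 1)) (exp_a_shift x q1 (q2 - 1) (fst p, snd p + 1)) else 0)"
proof (cases q2)
  case 0 then show ?thesis by (simp add: lin.linear_0[OF linear_expT])
next
  case (Suc m)
  have "(\<Sum>l1\<le>q1. \<Sum>l2\<le>q2. expT (q1 - l1, q2 - l2) (scale (of_nat l2) (a_shift x (l1,l2) p)))
      = (\<Sum>l1\<le>q1. \<Sum>l2\<le>m. expT (q1 - l1, m - l2) (scale (of_nat (Suc l2)) (a_shift x (l1, Suc l2) p)))"
    unfolding Suc sum.atMost_Suc_shift by (simp add: lin.linear_0[OF linear_expT] del: of_nat_Suc)
  also have "\<dots> = (\<Sum>l1\<le>q1. \<Sum>l2\<le>m. scale (- (snd p + 1)) (expT (q1 - l1, m - l2) (a_shift x (l1,l2) (fst p, snd p + 1))))"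
    by (simp only: a_shift_Suc_snd lin.linear_scale[OF linear_expT])
  also have "\<dots> = scale (- (snd p + 1)) (exp_a_shift x q1 m (fst p, snd p + 1))"
    unfolding exp_a_shift_def by (simp add: scale_sum_right)
  finally show ?thesis using Suc by simp
qed

text \<open>\<open>a(z) e\<^sup>w\<^sup>T = e\<^sup>w\<^sup>T a(z - w)\<close>: both sides satisfy the recursion of \<open>expT\<close> in \<open>q\<close>, by
  translation covariance.\<close>
lemma a_expT: "a (negm1 p) (expT (q1, q2) x) = exp_a_shift x q1 q2 p"
proof (induction "q1 + q2" arbitrary: q1 q2 p rule: less_induct)
  case less
  show ?case
  proof (cases "q1 + q2 = 0")
    case True
    then have "q1 = 0" "q2 = 0" by auto
    then show ?thesis by (simp add: exp_a_shift_def expT_0 a_shift_def)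
  next
    case False
    have IH1: "a (negm1 p') (expT (q1 - Suc 0, q2) x) = exp_a_shift x (q1 - Suc 0) q2 p'" if "0 < q1" for p'
      using less that by simp
    have IH2: "a (negm1 p') (expT (q1, q2 - Suc 0) x) = exp_a_shift x q1 (q2 - Suc 0) p'" if "0 < q2" for p'
      using less that by simp
    have "scale (of_nat (q1 + q2)) (a (negm1 p) (expT (q1, q2) x))
        = a (negm1 p) ((if 0 < q1 then T (expT (q1 - 1, q2) x) else 0) + (if 0 < q2 then Tb (expT (q1, q2 - 1) x) else 0))"
      by (subst lin.linear_scale[OF a_linear, symmetric]) (simp only: expT_rec)
    also have "\<dots> = (if 0 < q1 then T (exp_a_shift x (q1 - 1) q2 p) - scale (fst p + 1) (exp_a_shift x (q1 - 1) q2 (fst p + 1, snd p)) else 0)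
        + (if 0 < q2 then Tb (exp_a_shift x q1 (q2 - 1) p) - scale (snd p + 1) (exp_a_shift x q1 (q2 - 1) (fst p, snd p + 1)) else 0)"
    proof -
      have h1: "a (negm1 p) (T (expT (q1 - Suc 0, q2) x))
          = T (exp_a_shift x (q1 - Suc 0) q2 p) - scale (fst p + 1) (exp_a_shift x (q1 - Suc 0) q2 (fst p + 1, snd p))"
        if "0 < q1" by (simp add: a_T_commute IH1[OF that])
      have h2: "a (negm1 p) (Tb (expT (q1, q2 - Suc 0) x))
          = Tb (exp_a_shift x q1 (q2 - Suc 0) p) - scale (snd p + 1) (exp_a_shift x q1 (q2 - Suc 0) (fst p, snd p + 1))"
        if "0 < q2" by (simp add: a_Tb_commute IH2[OF that])
      show ?thesis
        by (simp add: lin.linear_add[OF a_linear] if_distrib[of "a (negm1 p)"] lin.linear_0[OF a_linear] h1 h2 cong: if_cong split del: if_split)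
    qed
    also have "\<dots> = scale (of_nat (q1 + q2)) (exp_a_shift x q1 q2 p)"
      unfolding exp_a_shift_split exp_a_shift_T_sum exp_a_shift_Tb_sum exp_a_shift_fst_weight_sum
        exp_a_shift_snd_weight_sum
      by (simp add: algebra_simps)
    finally have fin: "scale (of_nat (q1 + q2)) (a (negm1 p) (expT (q1, q2) x)) = scale (of_nat (q1 + q2)) (exp_a_shift x q1 q2 p)" .
    have nz: "(of_nat (q1 + q2) :: 'k) \<noteq> 0" using False by (simp only: of_nat_eq_0_iff) simp
    show ?thesis using fin nz scale_cancel_left by blast
  qed
qed

lemma b_one_expT: "b (negm1 (of_nat n1, of_nat n2)) one = expT (n1, n2) (s1 one b)"
  using strongly_creative_b unfolding strongly_creative_def expT_def by simp

text \<open>The coefficients of \<open>e\<^sup>w\<^sup>T c\<^sup>i(z - w, 0) 1\<close>, extended by \<open>0\<close> to exponents of \<open>w\<close> outside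
  \<open>\<nat>\<^sup>2\<close> in \<open>num_translate\<close>.\<close>
definition num_translate_nat :: "nat \<Rightarrow> 'k \<times> 'k \<Rightarrow> nat \<times> nat \<Rightarrow> 'v" where
  "num_translate_nat i x n = (\<Sum>q1\<le>fst n. \<Sum>q2\<le>snd n. expT (fst n - q1, snd n - q2)
      (scale ((-1)^(q1 + q2) * ((fst x + of_nat q1) gchoose q1) * ((snd x + of_nat q2) gchoose q2))
        (num_one i (fst x + of_nat q1, snd x + of_nat q2) (0,0))))"

definition num_translate :: "nat \<Rightarrow> 'k \<times> 'k \<Rightarrow> 'k \<times> 'k \<Rightarrow> 'v" where
  "num_translate i x y = (if in_trans (0,0) y then num_translate_nat i x (nat_pair_of y) else 0)"

lemma num_translate_at_nat: "num_translate i x (of_nat n1, of_nat n2) = num_translate_nat i x (n1, n2)"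
  by (simp add: num_translate_def nat_pair_of_of_nat in_trans_def)

lemma num_translate_support: "i < r \<Longrightarrow> num_translate i x y \<noteq> 0 \<Longrightarrow> in_trans (0,0) x \<and> in_trans (0,0) y"
proof -
  assume i: "i < r" and nz: "num_translate i x y \<noteq> 0"
  then have y: "in_trans (0,0) y" by (simp add: num_translate_def split: if_splits)
  from nz y have "num_translate_nat i x (nat_pair_of y) \<noteq> 0" by (simp add: num_translate_def)
  then obtain q1 q2 where "expT (fst (nat_pair_of y) - q1, snd (nat_pair_of y) - q2)
      (scale ((-1)^(q1 + q2) * ((fst x + of_nat q1) gchoose q1) * ((snd x + of_nat q2) gchoose q2))
        (num_one i (fst x + of_nat q1, snd x + of_nat q2) (0,0))) \<noteq> 0"
    unfolding num_translate_nat_def by (meson sum.not_neutral_contains_not_neutral)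
  then have b1: "(fst x + of_nat q1) gchoose q1 \<noteq> 0" and b2: "(snd x + of_nat q2) gchoose q2 \<noteq> 0"
    and Cnz: "num_one i (fst x + of_nat q1, snd x + of_nat q2) (0,0) \<noteq> 0"
    using lin.linear_0[OF linear_expT] by auto
  then have "in_trans (0,0) (fst x + of_nat q1, snd x + of_nat q2)" using num_one_creative[OF i] by blast
  then obtain X1 X2 :: nat where X: "fst x + of_nat q1 = of_nat X1" "snd x + of_nat q2 = of_nat X2"
    unfolding in_trans_def by auto
  have "q1 \<le> X1" using b1 X(1) gbinomial_of_nat_nonzero_imp_le by metis
  have "q2 \<le> X2" using b2 X(2) gbinomial_of_nat_nonzero_imp_le by metis
  have "fst x = of_nat (X1 - q1)" using X(1) \<open>q1 \<le> X1\<close> by (simp add: of_nat_diff algebra_simps)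
  moreover have "snd x = of_nat (X2 - q2)" using X(2) \<open>q2 \<le> X2\<close> by (simp add: of_nat_diff algebra_simps)
  ultimately have "in_trans (0,0) x" unfolding in_trans_def
    by (intro exI[of _ "X1 - q1"] exI[of _ "X2 - q2"]) (simp add: prod_eq_iff)
  with y show ?thesis by simp
qed

lemma num_translate_w_support: "i < r \<Longrightarrow> num_translate i x y \<noteq> 0 \<Longrightarrow> in_trans (0,0) y"
  using num_translate_support by blast

lemma mulZW_num_translate_at_nat:
  assumes i: "i < r"
  shows "mulZW scale (negp (h i)) (num_translate i) p (of_nat n1, of_nat n2) = (\<Sum>u1\<le>n1. \<Sum>u2\<le>n2.
     expT (n1 - u1, n2 - u2)
       (scale ((-1)^(u1 + u2) * ((fst p + of_nat u1) gchoose u1) * ((snd p + of_nat u2) gchoose u2))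
         (num_one i (fst p + fst (h i) + of_nat u1, snd p + snd (h i) + of_nat u2) (0,0))))"
proof -
  define h1 where "h1 = fst (h i)"
  define h2 where "h2 = snd (h i)"
  define p1 where "p1 = fst p"
  define p2 where "p2 = snd p"
  define FF where "FF j1 j2 q1 q2 = expT (n1 - j1 - q1, n2 - j2 - q2)
     (scale (zw_coeff (h i) (j1, j2) * ((-1)^(q1 + q2) * ((p1 + h1 + of_nat j1 + of_nat q1) gchoose q1)
          * ((p2 + h2 + of_nat j2 + of_nat q2) gchoose q2)))
       (num_one i (p1 + h1 + of_nat j1 + of_nat q1, p2 + h2 + of_nat j2 + of_nat q2) (0,0)))" for j1 j2 q1 q2
  define K where "K j1 j2 u1 u2 = zw_coeff (h i) (j1, j2) * ((-1)^((u1 - j1) + (u2 - j2))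
      * ((p1 + h1 + of_nat u1) gchoose (u1 - j1)) * ((p2 + h2 + of_nat u2) gchoose (u2 - j2)))" for j1 j2 u1 u2
  define Cc where "Cc u1 u2 = num_one i (p1 + h1 + of_nat u1, p2 + h2 + of_nat u2) (0,0)" for u1 u2
  have "mulZW scale (negp (h i)) (num_translate i) p (of_nat n1, of_nat n2)
      = (\<Sum>j1\<le>n1. \<Sum>j2\<le>n2. scale (zw_coeff (h i) (j1, j2))
         (num_translate i (p1 + h1 + of_nat j1, p2 + h2 + of_nat j2) (of_nat (n1 - j1), of_nat (n2 - j2))))"
    unfolding h1_def h2_def p1_def p2_def
    by (rule mulZW_at_nat[where F = "num_translate i", OF num_translate_w_support[OF i]])
  also have "\<dots> = (\<Sum>j1\<le>n1. \<Sum>j2\<le>n2. \<Sum>q1\<le>n1 - j1. \<Sum>q2\<le>n2 - j2. FF j1 j2 q1 q2)"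
    unfolding num_translate_at_nat num_translate_nat_def FF_def fst_conv snd_conv
    by (simp add: scale_sum_right lin.linear_scale[OF linear_expT] diff_diff_left)
  also have "\<dots> = (\<Sum>u1\<le>n1. \<Sum>u2\<le>n2. \<Sum>j1\<le>u1. \<Sum>j2\<le>u2. FF j1 j2 (u1 - j1) (u2 - j2))"
    by (rule sum_triangle_reindex2)
  also have "\<dots> = (\<Sum>u1\<le>n1. \<Sum>u2\<le>n2. \<Sum>j1\<le>u1. \<Sum>j2\<le>u2.
      expT (n1 - u1, n2 - u2) (scale (K j1 j2 u1 u2) (Cc u1 u2)))"
  proof (intro sum.cong refl)
    fix u1 u2 j1 j2 assume "u1 \<in> {..n1}" "u2 \<in> {..n2}" "j1 \<in> {..u1}" "j2 \<in> {..u2}"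
    then have le: "j1 \<le> u1" "u1 \<le> n1" "j2 \<le> u2" "u2 \<le> n2" by auto
    have "n1 - j1 - (u1 - j1) = n1 - u1" "n2 - j2 - (u2 - j2) = n2 - u2" using le by auto
    moreover have "p1 + h1 + of_nat j1 + of_nat (u1 - j1) = p1 + h1 + of_nat u1"
      "p2 + h2 + of_nat j2 + of_nat (u2 - j2) = p2 + h2 + of_nat u2" using le by (simp_all add: of_nat_diff)
    ultimately show "FF j1 j2 (u1 - j1) (u2 - j2) = expT (n1 - u1, n2 - u2) (scale (K j1 j2 u1 u2) (Cc u1 u2))"
      unfolding FF_def K_def Cc_def by (simp only: mult.assoc)
  qed
  also have "\<dots> = (\<Sum>u1\<le>n1. \<Sum>u2\<le>n2. expT (n1 - u1, n2 - u2)
      (scale (\<Sum>j1\<le>u1. \<Sum>j2\<le>u2. K j1 j2 u1 u2) (Cc u1 u2)))"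
    by (simp add: lin.linear_sum[OF linear_expT, symmetric] scale_sum_left[symmetric])
  finally show ?thesis
    unfolding K_def Cc_def h1_def h2_def p1_def p2_def zw_coeff_Vandermonde .
qed

lemma sum_mulZW_num_translate:
  "(\<Sum>i<r. mulZW scale (negp (h i)) (num_translate i) p (of_nat n1, of_nat n2))
     = a (negm1 p) (expT (n1, n2) (s1 one b))"
proof -
  have "(\<Sum>i<r. mulZW scale (negp (h i)) (num_translate i) p (of_nat n1, of_nat n2))
     = (\<Sum>i<r. \<Sum>u1\<le>n1. \<Sum>u2\<le>n2. expT (n1 - u1, n2 - u2)
     (scale ((-1)^(u1 + u2) * ((fst p + of_nat u1) gchoose u1) * ((snd p + of_nat u2) gchoose u2))
       (num_one i (fst p + fst (h i) + of_nat u1, snd p + snd (h i) + of_nat u2) (0,0))))"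
    by (rule sum.cong[OF refl]) (simp add: mulZW_num_translate_at_nat)
  also have "\<dots> = (\<Sum>u1\<le>n1. \<Sum>u2\<le>n2. expT (n1 - u1, n2 - u2)
     (scale ((-1)^(u1 + u2) * ((fst p + of_nat u1) gchoose u1) * ((snd p + of_nat u2) gchoose u2))
       (\<Sum>i<r. num_one i (fst p + fst (h i) + of_nat u1, snd p + snd (h i) + of_nat u2) (0,0))))"
    by (simp add: lin.linear_sum[OF linear_expT] scale_sum_right sum.swap[of _ "{..<r}"])
  also have "\<dots> = exp_a_shift (s1 one b) n1 n2 p"
    unfolding exp_a_shift_def a_shift_def
  proof (intro sum.cong refl)
    fix u1 u2
    have "(\<Sum>i<r. num_one i (fst p + fst (h i) + of_nat u1, snd p + snd (h i) + of_nat u2) (0,0))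
        = a (negm1 (fst p + of_nat u1, snd p + of_nat u2)) (s1 one b)"
      unfolding a_s1_b by (intro sum.cong refl) (simp add: algebra_simps)
    then show "expT (n1 - u1, n2 - u2) (scale ((-1)^(u1 + u2) * ((fst p + of_nat u1) gchoose u1) * ((snd p + of_nat u2) gchoose u2))
       (\<Sum>i<r. num_one i (fst p + fst (h i) + of_nat u1, snd p + snd (h i) + of_nat u2) (0,0))) =
      expT (n1 - u1, n2 - u2) (scale ((-1) ^ (fst (u1, u2) + snd (u1, u2)) * ((fst p + of_nat (fst (u1, u2))) gchoose fst (u1, u2)) *
          ((snd p + of_nat (snd (u1, u2))) gchoose snd (u1, u2)))
        (a (negm1 (fst p + of_nat (fst (u1, u2)), snd p + of_nat (snd (u1, u2)))) (s1 one b)))"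
      by simp
  qed
  also have "\<dots> = a (negm1 p) (expT (n1, n2) (s1 one b))" by (rule a_expT[symmetric])
  finally show ?thesis .
qed

text \<open>Both \<open>num_one i\<close> and \<open>num_translate i\<close> give \<open>a(z) e\<^sup>w\<^sup>T s\<^sub>1(b) = a(z) b(w) 1\<close> after
  multiplication by \<open>(z - w)\<^sup>-\<^sup>h\<^sup>i\<close> and summation, so they agree by uniqueness of the expansion.\<close>
lemma num_one_eq_num_translate:
  assumes "i < r"
  shows "num_one i x y = num_translate i x y"
proof -
  define G where "G = (\<lambda>i x y. num_one i x y - num_translate i x y)"
  have supp: "in_trans (0, 0) x \<and> in_trans (0, 0) y" if "i < r" "G i x y \<noteq> 0" for i x y
  proof -
    from that(2) have "num_one i x y \<noteq> 0 \<or> num_translate i x y \<noteq> 0" by (auto simp: G_def)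
    then show ?thesis using num_one_creative[OF that(1)] num_translate_support[OF that(1)] by blast
  qed
  have "vseries2 (G i)" if "i < r" for i
    unfolding vseries2_def using supp[OF that] by (intro exI[of _ "{((0, 0), (0, 0))}"]) auto
  moreover have "(\<Sum>i<r. mulZW scale (negp (h i)) (G i) p q) = 0" for p q
  proof (cases "in_trans (0, 0) q")
    case True
    then obtain n1 n2 where q: "q = (of_nat n1, of_nat n2)" unfolding in_trans_0_iff by blast
    have "mulZW scale (negp (h i)) (G i) p q
        = mulZW scale (negp (h i)) (num_one i) p q - mulZW scale (negp (h i)) (num_translate i) p q" if "i < r" for i
      using mulZW_at_nat[where F = "G i", OF supp[OF that, THEN conjunct2]]
        mulZW_at_nat[where F = "num_translate i", OF num_translate_w_support[OF that]]
        mulZW_at_nat[where F = "num_one i", OF num_one_creative[OF that, THEN conjunct2]]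
      by (simp add: q G_def scale_right_diff_distrib sum_subtractf)
    then show ?thesis
      by (simp add: sum_subtractf a_b_one[symmetric] q b_one_expT sum_mulZW_num_translate)
  next
    case False
    have "mulZW scale (negp (h i)) (G i) p q = 0" if "i < r" for i
      using mulZW_at_non_nat[OF supp[OF that, THEN conjunct2] False] .
    then show ?thesis by simp
  qed
  ultimately have "G i x y = 0"
    using sum_mulZW_eq_0_imp_eq_0[OF _ pole_orders_fst_incongruent _ assms] by blast
  then show ?thesis by (simp add: G_def)
qed

text \<open>Differentiating \<open>e\<^sup>w\<^sup>T c\<^sup>i(z - w, 0) 1\<close> in \<open>z\<close> and setting \<open>z = w\<close>: after regrouping, the
  binomial weights form alternating sums that vanish except in the lowest term.\<close>
lemma diag_der_num_translate:
  assumes i: "i < r"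
  shows "diag_der scale k1 k2 (num_translate i) (of_nat e1, of_nat e2) = expT (e1, e2) (num_one i (of_nat k1, of_nat k2) (0,0))"
proof -
  define GG where "GG P1 P2 q1 q2 = expT (e1 - P1 - q1, e2 - P2 - q2)
      (scale (of_nat ((P1 + k1) choose k1) * of_nat ((P2 + k2) choose k2) *
        ((-1)^(q1 + q2) * of_nat ((P1 + k1 + q1) choose q1) * of_nat ((P2 + k2 + q2) choose q2)))
       (num_one i (of_nat (P1 + k1 + q1), of_nat (P2 + k2 + q2)) (0,0)))" for P1 P2 q1 q2
  have st2: "scale (of_nat ((P1 + k1) choose k1) * of_nat ((P2 + k2) choose k2))
        (num_translate i (of_nat (P1 + k1), of_nat (P2 + k2)) (of_nat (e1 - P1), of_nat (e2 - P2)))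
      = (\<Sum>q1\<le>e1 - P1. \<Sum>q2\<le>e2 - P2. GG P1 P2 q1 q2)" for P1 P2
    unfolding num_translate_at_nat num_translate_nat_def GG_def
    by (simp add: scale_sum_right lin.linear_scale[OF linear_expT] binomial_gbinomial diff_diff_left algebra_simps)
  define dd1 where "dd1 P1 u1 = (of_nat ((P1 + k1) choose k1) * ((-1)^(u1 - P1) * of_nat ((u1 + k1) choose (u1 - P1))) :: 'k)" for P1 u1
  define dd2 where "dd2 P2 u2 = (of_nat ((P2 + k2) choose k2) * ((-1)^(u2 - P2) * of_nat ((u2 + k2) choose (u2 - P2))) :: 'k)" for P2 u2
  define Cu where "Cu u1 u2 = num_one i (of_nat (u1 + k1), of_nat (u2 + k2)) (0,0)" for u1 u2
  have "diag_der scale k1 k2 (num_translate i) (of_nat e1, of_nat e2) = (\<Sum>P1\<le>e1. \<Sum>P2\<le>e2.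
      scale (of_nat ((P1 + k1) choose k1) * of_nat ((P2 + k2) choose k2))
        (num_translate i (of_nat (P1 + k1), of_nat (P2 + k2)) (of_nat (e1 - P1), of_nat (e2 - P2))))"
    by (rule diag_der_at_nat) (erule num_translate_support[OF i])
  also have "\<dots> = (\<Sum>P1\<le>e1. \<Sum>P2\<le>e2. \<Sum>q1\<le>e1 - P1. \<Sum>q2\<le>e2 - P2. GG P1 P2 q1 q2)"
    by (simp only: st2)
  also have "\<dots> = (\<Sum>u1\<le>e1. \<Sum>u2\<le>e2. \<Sum>P1\<le>u1. \<Sum>P2\<le>u2. GG P1 P2 (u1 - P1) (u2 - P2))"
    by (rule sum_triangle_reindex2)
  also have "\<dots> = (\<Sum>u1\<le>e1. \<Sum>u2\<le>e2. \<Sum>P1\<le>u1. \<Sum>P2\<le>u2. expT (e1 - u1, e2 - u2) (scale (dd1 P1 u1 * dd2 P2 u2) (Cu u1 u2)))"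
  proof (intro sum.cong refl)
    fix u1 u2 P1 P2 assume "u1 \<in> {..e1}" "u2 \<in> {..e2}" "P1 \<in> {..u1}" "P2 \<in> {..u2}"
    then have le: "P1 \<le> u1" "P2 \<le> u2" by auto
    have e: "e1 - P1 - (u1 - P1) = e1 - u1" "e2 - P2 - (u2 - P2) = e2 - u2"
      "P1 + k1 + (u1 - P1) = u1 + k1" "P2 + k2 + (u2 - P2) = u2 + k2" using le by auto
    show "GG P1 P2 (u1 - P1) (u2 - P2) = expT (e1 - u1, e2 - u2) (scale (dd1 P1 u1 * dd2 P2 u2) (Cu u1 u2))"
      unfolding GG_def e dd1_def dd2_def Cu_def by (simp add: power_add algebra_simps)
  qed
  also have "\<dots> = (\<Sum>u1\<le>e1. \<Sum>u2\<le>e2. expT (e1 - u1, e2 - u2) (scale ((\<Sum>P1\<le>u1. dd1 P1 u1) * (\<Sum>P2\<le>u2. dd2 P2 u2)) (Cu u1 u2)))"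
    by (simp add: lin.linear_sum[OF linear_expT, symmetric] scale_sum_left[symmetric] sum_product)
  also have "\<dots> = (\<Sum>u1\<le>e1. \<Sum>u2\<le>e2. if u1 = 0 then (if u2 = 0 then expT (e1, e2) (Cu 0 0) else 0) else 0)"
    unfolding dd1_def dd2_def alternating_binomial_convolution by (intro sum.cong refl) (simp add: lin.linear_0[OF linear_expT])
  also have "\<dots> = (\<Sum>u1\<le>e1. if u1 = 0 then (\<Sum>u2\<le>e2. if u2 = 0 then expT (e1, e2) (Cu 0 0) else 0) else 0)"
    by (rule sum.cong[OF refl]) simp
  also have "\<dots> = expT (e1, e2) (Cu 0 0)" by (simp add: sum.delta)
  finally show ?thesis unfolding Cu_def by simp
qed

lemma nth_prod_one_expT:
  "nth_prod scale r h c n (negm1 (of_nat e1, of_nat e2)) one = expT (e1, e2) (s1 one (nth_prod scale r h c n))"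
proof -
  have "nth_prod scale r h c n (negm1 (of_nat e1, of_nat e2)) one
      = (\<Sum>i<r. expT (e1, e2) (num_one i (fst (h i) - 1 - fst n, snd (h i) - 1 - snd n) (0, 0)))"
  proof (rule nth_prod_one)
    fix i ka kb assume "i < r"
    then have "num_one i = num_translate i" using num_one_eq_num_translate by (simp add: fun_eq_iff)
    with \<open>i < r\<close> show "diag_der scale ka kb (num_one i) (of_nat e1, of_nat e2) = expT (e1, e2) (num_one i (of_nat ka, of_nat kb) (0, 0))"
      by (simp add: diag_der_num_translate)
  qed (simp add: lin.linear_0[OF linear_expT])
  then show ?thesis by (simp add: s1_nth_prod lin.linear_sum[OF linear_expT])
qed

lemma strongly_creative_nth_prod: "strongly_creative scale one T Tb (nth_prod scale r h c n)"
  unfolding strongly_creative_def using creative1_nth_prod nth_prod_one_expT by (simp add: expT_def)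

end

context creative_local_pair
begin

lemma a_s1_b_in_translates:
  "\<exists>f :: nat \<Rightarrow> 'k \<times> 'k \<Rightarrow> 'v. (\<forall>i<r. \<forall>p. f i p \<noteq> 0 \<longrightarrow> in_trans (negp (h i)) p)
      \<and> ser1 a (s1 one b) = (\<lambda>p. \<Sum>i<r. f i p)"
proof (intro exI conjI allI impI)
  fix i p
  assume "i < r" and "num_one i (fst p + fst (h i), snd p + snd (h i)) (0, 0) \<noteq> 0"
  then obtain m1 m2 :: nat where "(fst p + fst (h i), snd p + snd (h i)) = (of_nat m1, of_nat m2)"
    using num_one_creative unfolding in_trans_0_iff by blast
  then show "in_trans (negp (h i)) p"
    unfolding in_trans_def negp_def by (intro exI[of _ m1] exI[of _ m2]) (auto simp: prod_eq_iff algebra_simps)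
qed (simp add: ser1_def a_s1_b fun_eq_iff)

end

theorem mainTheorem15:
  fixes scale :: "'k::field_char_0 \<Rightarrow> 'v::ab_group_add \<Rightarrow> 'v"
    and \<sigma> :: "'v \<Rightarrow> 'v" and one :: 'v and T Tb :: "'v \<Rightarrow> 'v"
    and a b :: "('k, 'v) dist1"
    and r :: nat and h :: "nat \<Rightarrow> 'k \<times> 'k" and c :: "nat \<Rightarrow> ('k, 'v) dist2"
  assumes "super_space scale \<sigma>"
    and "even_vec \<sigma> one"
    and "even_op scale \<sigma> T" and "even_op scale \<sigma> Tb"
    and "End_dist1 scale a" and "End_dist1 scale b"
    and "creative1 one a" and "creative1 one b"
    and "mutually_local scale \<sigma> a b"
    and "reduced_OPE scale \<sigma> a b r h c"
  shows "\<forall>n. (creative1 one (nth_prod scale r h c n) \<and> (\<forall>i<r. creative2 one (c i)))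
           \<and> (\<exists>f :: nat \<Rightarrow> 'k \<times> 'k \<Rightarrow> 'v. (\<forall>i<r. \<forall>p. f i p \<noteq> 0 \<longrightarrow> in_trans (negp (h i)) p)
                 \<and> ser1 a (s1 one b) = (\<lambda>p. \<Sum>i<r. f i p))
           \<and> s1 one (nth_prod scale r h c n) = a n (s1 one b)
           \<and> (transl_cov scale T Tb a \<and> strongly_creative scale one T Tb b
                \<longrightarrow> strongly_creative scale one T Tb (nth_prod scale r h c n))"
proof -
  have "vector_space scale" using assms(1) unfolding super_space_def by blast
  moreover have "local_data scale \<sigma> a b r h c" and "\<forall>i<r. \<forall>j<r. i \<noteq> j \<longrightarrow>
        \<not> (\<exists>k l::int. fst (h i) - fst (h j) = of_int k \<and> snd (h i) - snd (h j) = of_int l)"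
    using assms(10) unfolding reduced_OPE_def by blast+
  ultimately have "creative_local_pair scale \<sigma> one a b r h c"
    using assms(5-8)
    unfolding creative_local_pair_def creative_local_pair_axioms_def vector_space_char_0_def by blast
  then interpret creative_local_pair scale \<sigma> one a b r h c .
  show ?thesis
  proof (rule allI, intro conjI impI)
    fix n
    show "creative1 one (nth_prod scale r h c n)" by (rule creative1_nth_prod)
    show "\<forall>i<r. creative2 one (c i)" using creative2_numerators by blast
    show "\<exists>f. (\<forall>i<r. \<forall>p. f i p \<noteq> 0 \<longrightarrow> in_trans (negp (h i)) p) \<and> ser1 a (s1 one b) = (\<lambda>p. \<Sum>i<r. f i p)"
      by (rule a_s1_b_in_translates)
    show "s1 one (nth_prod scale r h c n) = a n (s1 one b)" by (rule s1_nth_prod_eq)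
    assume "transl_cov scale T Tb a \<and> strongly_creative scale one T Tb b"
    moreover have "Vector_Spaces.linear scale scale T" "Vector_Spaces.linear scale scale Tb"
      using assms(3,4) unfolding even_op_def by blast+
    ultimately have "translation_covariant_pair scale \<sigma> one a b r h c T Tb"
      using creative_local_pair_axioms
      unfolding translation_covariant_pair_def translation_covariant_pair_axioms_def by blast
    then interpret translation_covariant_pair scale \<sigma> one a b r h c T Tb .
    show "strongly_creative scale one T Tb (nth_prod scale r h c n)" by (rule strongly_creative_nth_prod)
  qed
qed

end
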